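(* Let $\Omega\subset\mathbb{R}^N$ be open and bounded, $\varepsilon>0$, $c_{11},c_{22}\le0$, $K$ admissible, $m_r,m_b>0$ with $m_r+m_b<|\Omega|$, and let $(\underline r,\underline b)\in\mathcal A$ be a minimizer of $F^\varepsilon$ over $\mathcal A$; set $\underline\rho=\underline r+\underline b$. Then for every $\phi\in L^\infty(\Omega)$ with $\int_\Omega\phi\,dx=0$, $$\int_\Omega\phi\Big(\varepsilon\big(\log\underline r-\log(1-\underline\rho)\big)+2\big(c_{11}K*\underline r-K*\underline b\big)\Big)dx=0,$$ $$\int_\Omega\phi\Big(\varepsilon\big(\log\underline b-\log(1-\underline\rho)\big)+2\big(c_{22}K*\underline b-K*\underline r\big)\Big)dx=0.$$ Consequently there exist constants $C_1,C_2\in\mathbb R$ (depending only on $\varepsilon,\underline r,\underline b,c_{11},c_{22},\Omega$) such that for a.e. $x\in\Omega$ $$\varepsilon[\log\underline r-\log(1-\underline\rho)]+2(c_{11}K*\underline r-K*\underline b)=C_1,\qquad \varepsilon[\log\underline b-\log(1-\underline\rho)]+2(c_{22}K*\underline b-K*\underline r)=C_2.$$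
   Context: Let $N\ge1$ and $\Omega\subset\mathbb{R}^N$ open. The Coulomb kernel on $\mathbb{R}^N$ is $K_N(x)=-\frac12|x|$ for $N=1$, $K_N(x)=-\frac1{2\pi}\log|x|$ for $N=2$, and $K_N(x)=\frac{1}{(N-2)\omega_N}|x|^{2-N}$ for $N\ge3$. A kernel $K$ is called admissible if (K1) $K\in W^{1,1}_{loc}(\Omega)$; (K2) $K(x)=k(|x|)$ with $k$ non-increasing; (K3) as $x\to0$ and as $|x|\to\infty$, $K$ is at most as singular as $K_N$. For densities $r,b$ write $\rho=r+b$ and $K*r(x)=\int_\Omega K(x-y)r(y)\,dy$. Define $F^E(r,b)=\int_\Omega r\log r+b\log b+(1-\rho)\log(1-\rho)\,dx$, $F^0(r,b)=\int_\Omega c_{11}r(K*r)-r(K*b)-b(K*r)+c_{22}b(K*b)\,dx$, $F^\varepsilon=\varepsilon F^E+F^0$. The admissible set is $\mathcal A=\{(r,b)\in L^1(\Omega;[0,\infty))^2:\int_\Omega r=m_r,\ \int_\Omega b=m_b,\ r+b\le1\text{ a.e.}\}$. *)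

theory Defs
  imports "HOL-Analysis.Analysis"
begin

(* omega_N = surface area of the unit sphere in R^N = N * |unit ball| *)
definition omega_N :: "'a::euclidean_space itself \<Rightarrow> real" where
  "omega_N _ = real DIM('a) * measure lborel (ball (0::'a) 1)"

definition coulomb :: "'a::euclidean_space \<Rightarrow> real" where
  "coulomb x =
     (if DIM('a) = 1 then - (1/2) * norm x
      else if DIM('a) = 2 then - (1 / (2*pi)) * ln (norm x)
      else (1 / ((real DIM('a) - 2) * omega_N TYPE('a))) * norm x powr (2 - real DIM('a)))"

fun Ck :: "nat \<Rightarrow> ('a::euclidean_space \<Rightarrow> real) \<Rightarrow> bool" where
  "Ck 0 f = continuous_on UNIV f"
| "Ck (Suc k) f = (continuous_on UNIV f \<and> (\<forall>x. f differentiable (at x)) \<and>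
                    (\<forall>i\<in>Basis. Ck k (\<lambda>x. frechet_derivative f (at x) i)))"

definition test_function :: "'a::euclidean_space set \<Rightarrow> ('a \<Rightarrow> real) \<Rightarrow> bool" where
  "test_function \<Omega> \<phi> \<longleftrightarrow> (\<forall>k. Ck k \<phi>) \<and>
     (\<exists>C. compact C \<and> C \<subseteq> \<Omega> \<and> (\<forall>x. x \<notin> C \<longrightarrow> \<phi> x = 0))"

definition locally_integrable_on :: "('a::euclidean_space \<Rightarrow> 'b::{banach,second_countable_topology}) \<Rightarrow> 'a set \<Rightarrow> bool" where
  "locally_integrable_on f \<Omega> \<longleftrightarrow> (\<forall>C. compact C \<and> C \<subseteq> \<Omega> \<longrightarrow> integrable (lebesgue_on C) f)"

definition W11_loc :: "('a::euclidean_space \<Rightarrow> real) \<Rightarrow> 'a set \<Rightarrow> bool" where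
  "W11_loc f \<Omega> \<longleftrightarrow> (\<exists>g::'a \<Rightarrow> 'a.
      locally_integrable_on f \<Omega> \<and> locally_integrable_on g \<Omega> \<and>
      (\<forall>\<phi>. test_function \<Omega> \<phi> \<longrightarrow> (\<forall>i\<in>Basis.
         (\<integral>x. f x * frechet_derivative \<phi> (at x) i \<partial>lebesgue_on \<Omega>) =
         - (\<integral>x. (g x \<bullet> i) * \<phi> x \<partial>lebesgue_on \<Omega>))))"

definition admissible :: "'a::euclidean_space set \<Rightarrow> ('a \<Rightarrow> real) \<Rightarrow> bool" where
  "admissible \<Omega> K \<longleftrightarrow>
     W11_loc K \<Omega> \<and>
     (\<exists>k::real \<Rightarrow> real. (\<forall>x. x \<noteq> 0 \<longrightarrow> K x = k (norm x)) \<and> (\<forall>s t. 0 < s \<longrightarrow> s \<le> t \<longrightarrow> k t \<le> k s)) \<and>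
     (\<exists>C \<delta>. 0 < \<delta> \<and> (\<forall>x. 0 < norm x \<and> norm x < \<delta> \<longrightarrow> \<bar>K x\<bar> \<le> C * \<bar>coulomb x\<bar>)) \<and>
     (\<exists>C R. \<forall>x. norm x > R \<longrightarrow> \<bar>K x\<bar> \<le> C * \<bar>coulomb x\<bar>)"

definition conv :: "'a::euclidean_space set \<Rightarrow> ('a \<Rightarrow> real) \<Rightarrow> ('a \<Rightarrow> real) \<Rightarrow> 'a \<Rightarrow> real" where
  "conv \<Omega> K r x = (\<integral>y. K (x - y) * r y \<partial>lebesgue_on \<Omega>)"

definition F_E :: "'a::euclidean_space set \<Rightarrow> ('a \<Rightarrow> real) \<Rightarrow> ('a \<Rightarrow> real) \<Rightarrow> real" where
  "F_E \<Omega> r b = (\<integral>x. r x * ln (r x) + b x * ln (b x)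
                     + (1 - (r x + b x)) * ln (1 - (r x + b x)) \<partial>lebesgue_on \<Omega>)"

definition F_0 :: "'a::euclidean_space set \<Rightarrow> ('a \<Rightarrow> real) \<Rightarrow> real \<Rightarrow> real \<Rightarrow> ('a \<Rightarrow> real) \<Rightarrow> ('a \<Rightarrow> real) \<Rightarrow> real" where
  "F_0 \<Omega> K c11 c22 r b = (\<integral>x. c11 * r x * conv \<Omega> K r x - r x * conv \<Omega> K b x
        - b x * conv \<Omega> K r x + c22 * b x * conv \<Omega> K b x \<partial>lebesgue_on \<Omega>)"

definition F_eps :: "real \<Rightarrow> 'a::euclidean_space set \<Rightarrow> ('a \<Rightarrow> real) \<Rightarrow> real \<Rightarrow> real \<Rightarrow> ('a \<Rightarrow> real) \<Rightarrow> ('a \<Rightarrow> real) \<Rightarrow> real" where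
  "F_eps \<epsilon> \<Omega> K c11 c22 r b = \<epsilon> * F_E \<Omega> r b + F_0 \<Omega> K c11 c22 r b"

definition admissible_set :: "'a::euclidean_space set \<Rightarrow> real \<Rightarrow> real \<Rightarrow> (('a \<Rightarrow> real) \<times> ('a \<Rightarrow> real)) set" where
  "admissible_set \<Omega> mr mb = {(r, b).
      integrable (lebesgue_on \<Omega>) r \<and> integrable (lebesgue_on \<Omega>) b \<and>
      (AE x in lebesgue_on \<Omega>. 0 \<le> r x \<and> 0 \<le> b x \<and> r x + b x \<le> 1) \<and>
      (\<integral>x. r x \<partial>lebesgue_on \<Omega>) = mr \<and> (\<integral>x. b x \<partial>lebesgue_on \<Omega>) = mb}"

definition essentially_bounded :: "'a::euclidean_space set \<Rightarrow> ('a \<Rightarrow> real) \<Rightarrow> bool" where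
  "essentially_bounded \<Omega> \<phi> \<longleftrightarrow> \<phi> \<in> borel_measurable (lebesgue_on \<Omega>) \<and>
     (\<exists>C. AE x in lebesgue_on \<Omega>. \<bar>\<phi> x\<bar> \<le> C)"

end

theory Submission
  imports Defs
begin

text \<open>
  Perturb the minimizer by moving a small amount \<open>t\<close> of red mass from a set \<open>V\<close> to a disjoint
  set \<open>U\<close>, both of positive measure. By convexity of \<open>s log s\<close> the entropy changes by at most \<open>t\<close>
  times \<open>\<epsilon> (log r - log (1 - \<rho>))\<close> evaluated at the perturbed densities, and the interaction energy
  by \<open>t\<close> times \<open>2 (c\<^sub>1\<^sub>1 K*r - K*b)\<close> plus \<open>O(t\<^sup>2)\<close>. So minimality bounds the chemical potential
  (the sum of these two expressions) on \<open>U\<close> from below by its values on \<open>V\<close>, up to \<open>O(t)\<close>.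
  Since the logarithm has infinite slope at \<open>0\<close>, such transfers first rule out saturated regions
  \<open>\<rho> = 1\<close> and vacuum regions \<open>r = 0\<close> of positive measure; then they show that no two level sets
  \<open>{\<dots> < a}\<close> and \<open>{\<dots> > c}\<close> with \<open>a < c\<close> both have positive measure, so the chemical potential is
  constant almost everywhere. Exchanging \<open>r\<close> and \<open>b\<close> gives the second identity, and integrating
  against a mean-zero \<open>\<phi>\<close> the weak form. All convolutions are bounded because an admissible kernel
  is dominated near \<open>0\<close> by \<open>|x|\<^sup>1\<^sup>-\<^sup>N\<close>, which is integrable on balls.
\<close>

lemma bounded_mult_comp:
  fixes f g :: "'a \<Rightarrow> 'b::real_normed_algebra"
  assumes "bounded (f ` S)" and "bounded (g ` S)"
  shows "bounded ((\<lambda>x. f x * g x) ` S)"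
proof -
  obtain B C where B: "\<forall>x\<in>S. norm (f x) \<le> B" and C: "\<forall>x\<in>S. norm (g x) \<le> C"
    using assms by (auto simp: bounded_iff)
  have "norm (f x * g x) \<le> B * C" if "x \<in> S" for x
    using that B C norm_mult_ineq[of "f x" "g x"]
    by (meson mult_mono norm_ge_zero order_trans)
  then show ?thesis by (auto simp: bounded_iff)
qed

lemma abs_mult_ln_le_one:
  fixes s :: real
  assumes "0 \<le> s" and "s \<le> 1"
  shows "\<bar>s * ln s\<bar> \<le> 1"
proof (cases "s = 0")
  case False
  with assms have s: "0 < s" by simp
  have "ln (1/s) \<le> 1/s - 1" using s by (intro ln_le_minus_one) simp
  then have "s * (- ln s) \<le> s * (1/s - 1)" using s by (intro mult_left_mono) (auto simp: ln_div)
  moreover have "s * ln s \<le> 0" using s assms by (simp add: mult_nonneg_nonpos)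
  ultimately show ?thesis using s assms by (simp add: algebra_simps)
qed simp

lemma mult_ln_diff_le:
  fixes x y :: real
  assumes "0 < x" and "0 \<le> y"
  shows "x * ln x - y * ln y \<le> (x - y) * (1 + ln x)"
proof (cases "y = 0")
  case False
  with assms have y: "0 < y" by simp
  have "ln (x / y) \<le> x / y - 1" using assms y by (intro ln_le_minus_one) simp
  then have "y * (ln x - ln y) \<le> y * (x / y - 1)" using assms y by (intro mult_left_mono) (auto simp: ln_div)
  then show ?thesis using y by (simp add: algebra_simps)
qed (use assms in simp)

lemma ln_diff_le:
  fixes x y :: real
  assumes "0 < x" and "0 < y"
  shows "ln x - ln y \<le> (x - y) / y"
  using ln_le_minus_one[of "x / y"] assms by (simp add: ln_div diff_divide_distrib)

lemma abs_ln_add_le: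
  fixes s d \<delta> :: real
  assumes "0 < \<delta>" and "\<delta> \<le> s" and "\<bar>d\<bar> \<le> \<delta> / 2"
  shows "\<bar>ln (s + d) - ln s\<bar> \<le> 2 * \<bar>d\<bar> / \<delta>"
proof -
  have sd: "\<delta> / 2 \<le> s + d" using assms by linarith
  have "ln (s + d) - ln s \<le> d / s" using ln_diff_le[of "s + d" s] assms sd by simp
  also have "\<dots> \<le> \<bar>d\<bar> / (\<delta> / 2)" using assms by (intro frac_le) auto
  also have "\<dots> = 2 * \<bar>d\<bar> / \<delta>" by simp
  finally have up: "ln (s + d) - ln s \<le> 2 * \<bar>d\<bar> / \<delta>" .
  have "ln s - ln (s + d) \<le> - d / (s + d)" using ln_diff_le[of s "s + d"] assms sd by simp
  also have "\<dots> \<le> \<bar>d\<bar> / (\<delta> / 2)" using assms sd by (intro frac_le) auto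
  also have "\<dots> = 2 * \<bar>d\<bar> / \<delta>" by simp
  finally have down: "ln s - ln (s + d) \<le> 2 * \<bar>d\<bar> / \<delta>" .
  from up down show ?thesis by linarith
qed

lemma ex_small_log_plus_linear_neg:
  fixes e c d t0 :: real
  assumes "0 < e" and "0 < t0"
  shows "\<exists>t. 0 < t \<and> t \<le> t0 \<and> e * ln t + c + t * d < 0"
proof -
  define t where "t = min t0 (min 1 (exp (- (\<bar>c\<bar> + \<bar>d\<bar> + 1) / e)))"
  have t: "0 < t" "t \<le> t0" "t \<le> 1" "t \<le> exp (- (\<bar>c\<bar> + \<bar>d\<bar> + 1) / e)"
    using assms by (auto simp: t_def)
  then have "ln t \<le> ln (exp (- (\<bar>c\<bar> + \<bar>d\<bar> + 1) / e))" by (subst ln_le_cancel_iff) auto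
  then have "ln t \<le> - (\<bar>c\<bar> + \<bar>d\<bar> + 1) / e" by simp
  then have "e * ln t \<le> - (\<bar>c\<bar> + \<bar>d\<bar> + 1)" using assms by (simp add: field_simps)
  moreover have "t * d \<le> t * \<bar>d\<bar>" using t by (intro mult_left_mono) auto
  moreover have "t * \<bar>d\<bar> \<le> \<bar>d\<bar>" using t by (simp add: mult_left_le_one_le)
  ultimately have "e * ln t + c + t * d < 0" using abs_ge_minus_self[of c] by linarith
  with t show ?thesis by blast
qed

lemma ex_small_linear_neg:
  fixes \<eta> d t0 :: real
  assumes "0 < \<eta>" and "0 < t0"
  shows "\<exists>t. 0 < t \<and> t \<le> t0 \<and> t * d - \<eta> < 0"
proof -
  define t where "t = min t0 (\<eta> / (2 * (\<bar>d\<bar> + 1)))"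
  have d1: "0 < \<bar>d\<bar> + 1" by simp
  have t: "0 < t" "t \<le> t0" "t \<le> \<eta> / (2 * (\<bar>d\<bar> + 1))" using assms by (auto simp: t_def)
  have "t * (\<bar>d\<bar> + 1) \<le> \<eta> / (2 * (\<bar>d\<bar> + 1)) * (\<bar>d\<bar> + 1)"
    using t d1 by (intro mult_right_mono) auto
  also have "\<dots> = \<eta> / 2" using d1 by (simp add: field_simps)
  finally have "t * (\<bar>d\<bar> + 1) \<le> \<eta> / 2" .
  moreover have "t * d \<le> t * (\<bar>d\<bar> + 1)" using t by (intro mult_left_mono) auto
  ultimately have "t * d - \<eta> < 0" using assms by linarith
  with t show ?thesis by blast
qed

definition entropy_density :: "real \<Rightarrow> real \<Rightarrow> real" where
  "entropy_density s u = s * ln s + u * ln u + (1 - (s + u)) * ln (1 - (s + u))"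

lemma abs_entropy_density_le:
  assumes "0 \<le> s" and "0 \<le> u" and "s + u \<le> 1"
  shows "\<bar>entropy_density s u\<bar> \<le> 3"
proof -
  have "\<bar>s * ln s\<bar> \<le> 1" "\<bar>u * ln u\<bar> \<le> 1" "\<bar>(1 - (s + u)) * ln (1 - (s + u))\<bar> \<le> 1"
    using assms by (auto intro!: abs_mult_ln_le_one)
  then show ?thesis unfolding entropy_density_def by linarith
qed

lemma entropy_density_diff_le:
  assumes "0 < s'" and "0 < 1 - (s' + u)" and "0 \<le> s" and "0 \<le> 1 - (s + u)"
  shows "entropy_density s' u - entropy_density s u \<le> (s' - s) * (ln s' - ln (1 - (s' + u)))"
  using mult_ln_diff_le[of s' s] mult_ln_diff_le[of "1 - (s' + u)" "1 - (s + u)"] assms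
  unfolding entropy_density_def by (simp add: algebra_simps)

lemma AE_le_if_AE_le_add_inverse_Suc:
  fixes f g :: "'a \<Rightarrow> real"
  assumes "\<And>k. AE x in M. f x \<le> g x + inverse (real (Suc k))"
  shows "AE x in M. f x \<le> g x"
proof -
  from assms have "AE x in M. \<forall>k. f x \<le> g x + inverse (real (Suc k))" by (simp add: AE_all_countable)
  then show ?thesis
  proof eventually_elim
    case (elim x)
    show ?case
    proof (rule ccontr)
      assume "\<not> f x \<le> g x"
      then obtain k where "inverse (real (Suc k)) < f x - g x" using reals_Archimedean[of "f x - g x"] by auto
      with elim show False by (auto simp: not_le[symmetric] algebra_simps)
    qed
  qed
qed

lemma ex_not_AE_nat:
  assumes "emeasure M (space M) \<noteq> 0" and "\<And>x. \<exists>n::nat. \<not> P n x"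
  shows "\<exists>n. \<not> (AE x in M. P n x)"
proof (rule ccontr)
  assume "\<not> ?thesis"
  then have "AE x in M. \<forall>n. P n x" by (simp add: AE_all_countable)
  then have "AE x in M. False" by eventually_elim (use assms(2) in blast)
  with assms(1) show False using ae_filter_eq_bot_iff[of M] by (simp add: eventually_False)
qed

lemma AE_eq_const_if_level_sets:
  fixes f :: "'a \<Rightarrow> real"
  assumes nontrivial: "emeasure M (space M) \<noteq> 0"
    and level_sets: "\<And>a c. a < c \<Longrightarrow> (AE x in M. a \<le> f x) \<or> (AE x in M. f x \<le> c)"
  shows "\<exists>C. AE x in M. f x = C"
proof -
  define S where "S = {a. AE x in M. a \<le> f x}"
  have S_down: "a' \<in> S" if "a \<in> S" "a' \<le> a" for a a'
    using that by (auto simp: S_def elim: AE_mp)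
  have "S \<noteq> {}"
  proof
    assume "S = {}"
    then have "AE x in M. f x \<le> c" for c using level_sets[of "c - 1" c] by (auto simp: S_def)
    moreover obtain n :: nat where "\<not> (AE x in M. f x \<le> - real n)"
      using ex_not_AE_nat[OF nontrivial, of "\<lambda>n x. f x \<le> - real n"]
      by (metis reals_Archimedean2 minus_less_iff not_le)
    ultimately show False by blast
  qed
  obtain n :: nat where "\<not> (AE x in M. real n \<le> f x)"
    using ex_not_AE_nat[OF nontrivial, of "\<lambda>n x. real n \<le> f x"] by (meson reals_Archimedean2 not_le)
  then have "bdd_above S" using S_down by (metis S_def bdd_aboveI le_cases mem_Collect_eq)
  define C where "C = Sup S" \<comment> \<open>the largest essential lower bound of \<open>f\<close>\<close>
  have "C - inverse (real (Suc k)) \<in> S" for k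
  proof -
    have "C - inverse (real (Suc k)) < Sup S" by (simp add: C_def)
    then obtain s where "s \<in> S" "C - inverse (real (Suc k)) < s"
      using less_cSup_iff[OF \<open>S \<noteq> {}\<close> \<open>bdd_above S\<close>] by blast
    then show ?thesis using S_down by simp
  qed
  then have "AE x in M. C \<le> f x + inverse (real (Suc k))" for k
    by (auto simp: S_def algebra_simps)
  then have lower: "AE x in M. C \<le> f x" by (rule AE_le_if_AE_le_add_inverse_Suc)
  have "AE x in M. f x \<le> C + inverse (real (Suc k))" for k
  proof -
    define a where "a = C + inverse (real (Suc k)) / 2"
    have "a \<notin> S" using cSup_upper[OF _ \<open>bdd_above S\<close>, of a] by (auto simp: a_def C_def)
    moreover have "a < C + inverse (real (Suc k))" by (simp add: a_def)
    ultimately show ?thesis using level_sets by (auto simp: S_def)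
  qed
  then have upper: "AE x in M. f x \<le> C" by (rule AE_le_if_AE_le_add_inverse_Suc)
  from lower upper have "AE x in M. f x = C" by eventually_elim simp
  then show ?thesis ..
qed

lemma not_AE_imp_ex_lower_bound:
  fixes g :: "'a \<Rightarrow> real"
  assumes "\<not> (AE x in M. \<not> P x)" and "AE x in M. P x \<longrightarrow> 0 < g x"
  shows "\<exists>\<delta>>0. \<not> (AE x in M. \<not> (P x \<and> \<delta> \<le> g x))"
proof (rule ccontr)
  assume "\<not> ?thesis"
  then have "AE x in M. \<not> (P x \<and> inverse (real (Suc k)) \<le> g x)" for k
    using inverse_Suc[where 'a=real] by blast
  then have "AE x in M. \<forall>k. \<not> (P x \<and> inverse (real (Suc k)) \<le> g x)"
    by (simp only: AE_all_countable) blast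
  with assms(2) have "AE x in M. \<not> P x"
    by eventually_elim (meson reals_Archimedean less_imp_le)
  with assms(1) show False ..
qed

lemma (in finite_measure) measure_pos_if_not_AE:
  assumes "{x \<in> space M. P x} \<in> sets M" and "\<not> (AE x in M. \<not> P x)"
  shows "0 < measure M {x \<in> space M. P x}"
proof -
  have "emeasure M {x \<in> space M. P x} \<noteq> 0"
    using assms AE_iff_measurable[of "{x \<in> space M. P x}" M "\<lambda>x. \<not> P x"] by auto
  then show ?thesis by (simp add: emeasure_eq_measure zero_less_measure_iff)
qed

lemma (in finite_measure) integral_mult_AE_const_eq_0:
  fixes \<phi> g :: "'a \<Rightarrow> real"
  assumes [measurable]: "\<phi> \<in> borel_measurable M" "g \<in> borel_measurable M"
    and "AE x in M. \<bar>\<phi> x\<bar> \<le> B" and "(\<integral>x. \<phi> x \<partial>M) = 0" and "AE x in M. g x = C"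
  shows "integrable M (\<lambda>x. \<phi> x * g x) \<and> (\<integral>x. \<phi> x * g x \<partial>M) = 0"
proof -
  have "integrable M \<phi>" using assms(3) by (intro integrable_const_bound[where B=B]) auto
  moreover have "AE x in M. \<phi> x * g x = C * \<phi> x" using assms(5) by eventually_elim simp
  ultimately show ?thesis
    using assms(4) integrable_cong_AE[of "\<lambda>x. \<phi> x * g x" M "\<lambda>x. C * \<phi> x"]
      integral_cong_AE[of "\<lambda>x. \<phi> x * g x" M "\<lambda>x. C * \<phi> x"] by simp
qed

section \<open>Admissible kernels and convolution\<close>

lemma radial_nonincreasing_borel_measurable:
  fixes K :: "'a::euclidean_space \<Rightarrow> real"
  assumes radial: "\<forall>x. x \<noteq> 0 \<longrightarrow> K x = k (norm x)"
    and nonincreasing: "\<forall>s t. 0 < s \<longrightarrow> s \<le> t \<longrightarrow> k t \<le> k s"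
  shows "K \<in> borel_measurable borel"
proof -
  define g where "g s = - k (exp s)" for s
  have "mono g" unfolding mono_def g_def using nonincreasing by auto
  then have [measurable]: "g \<in> borel_measurable borel" by (rule borel_measurable_mono)
  have "K = (\<lambda>z. if z = 0 then K 0 else - g (ln (norm z)))"
    using radial by (auto simp: g_def fun_eq_iff)
  then show ?thesis by (elim ssubst) measurable
qed

lemma ex_dyadic_shell:
  fixes D x :: real
  assumes "0 < x" and "x < D"
  obtains n where "D / 2 ^ Suc n \<le> x" and "x < D / 2 ^ n"
proof -
  obtain k where "D / x < 2 ^ k" using real_arch_pow[of 2 "D / x"] by auto
  then have ex: "\<exists>k. D / 2 ^ k \<le> x" using assms by (auto simp: field_simps intro!: exI[of _ k])
  define k where "k = (LEAST k. D / 2 ^ k \<le> x)"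
  have k: "D / 2 ^ k \<le> x" unfolding k_def by (rule LeastI_ex[OF ex])
  moreover have "k \<noteq> 0"
  proof
    assume "k = 0"
    with k assms show False by simp
  qed
  then obtain n where n: "k = Suc n" using not0_implies_Suc by blast
  moreover have "\<not> D / 2 ^ n \<le> x" using not_less_Least[of n "\<lambda>k. D / 2 ^ k \<le> x"] n by (simp add: k_def)
  ultimately show ?thesis using that by simp
qed

lemma indicator_ball_norm_powr_le_dyadic:
  fixes z :: "'a::real_normed_vector"
  assumes "0 < D" and "p \<le> 0"
  shows "indicator (ball 0 D) z * ennreal (norm z powr p)
    \<le> (\<Sum>n. ennreal ((D / 2 ^ Suc n) powr p) * indicator (ball 0 (D / 2 ^ n)) z)"
proof (cases "z = 0 \<or> D \<le> norm z")
  case False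
  then obtain m where m: "D / 2 ^ Suc m \<le> norm z" "norm z < D / 2 ^ m"
    using ex_dyadic_shell[of "norm z" D] by auto
  have "norm z powr p \<le> (D / 2 ^ Suc m) powr p"
    using m False assms by (intro powr_mono2') auto
  then have "indicator (ball 0 D) z * ennreal (norm z powr p)
      \<le> ennreal ((D / 2 ^ Suc m) powr p) * indicator (ball 0 (D / 2 ^ m)) z"
    using m False by (auto simp: indicator_def intro: ennreal_leI)
  also have "\<dots> \<le> (\<Sum>n. ennreal ((D / 2 ^ Suc n) powr p) * indicator (ball 0 (D / 2 ^ n)) z)"
    using ennreal_suminf_lessD[of "\<lambda>n. ennreal ((D / 2 ^ Suc n) powr p) * indicator (ball 0 (D / 2 ^ n)) z" _ m]
    by (meson not_le order_less_irrefl)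
  finally show ?thesis .
qed (auto simp: indicator_def)

lemma dyadic_powr_mult_power:
  fixes D :: real
  assumes "0 < D"
  shows "(D / 2 ^ Suc n) powr (1 - real N) * (D / 2 ^ n) ^ N = 2 ^ N * D * (1/2) ^ Suc n"
proof -
  define q where "q = D / 2 ^ Suc n"
  have q: "0 < q" "D / 2 ^ n = 2 * q" using assms by (simp_all add: q_def)
  then have "q powr (1 - real N) * (D / 2 ^ n) ^ N = 2 ^ N * (q powr (1 - real N) * q powr real N)"
    by (simp add: powr_realpow power_mult_distrib)
  also have "q powr (1 - real N) * q powr real N = q" using q by (simp add: powr_add[symmetric])
  finally show ?thesis by (simp add: q_def power_one_over field_simps)
qed

lemma nn_integral_norm_powr_ball_finite:
  assumes "0 < D"
  shows "(\<integral>\<^sup>+ z. indicator (ball (0::'a::euclidean_space) D) z * ennreal (norm z powr (1 - real DIM('a))) \<partial>lborel) < \<infinity>"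
proof -
  define N where "N = DIM('a)"
  define c where "c n = (D / 2 ^ Suc n) powr (1 - real N)" for n
  have [measurable]: "ball (0::'a) \<rho> \<in> sets borel" for \<rho> by simp
  have "(\<integral>\<^sup>+ z. indicator (ball (0::'a) D) z * ennreal (norm z powr (1 - real N)) \<partial>lborel)
      \<le> (\<integral>\<^sup>+ z. (\<Sum>n. ennreal (c n) * indicator (ball (0::'a) (D / 2 ^ n)) z) \<partial>lborel)"
    unfolding c_def using assms DIM_positive[where 'a='a]
    by (intro nn_integral_mono indicator_ball_norm_powr_le_dyadic) (auto simp: N_def)
  also have "\<dots> = (\<Sum>n. \<integral>\<^sup>+ z. ennreal (c n) * indicator (ball (0::'a) (D / 2 ^ n)) z \<partial>lborel)"
    by (rule nn_integral_suminf) measurable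
  also have "\<dots> = (\<Sum>n. ennreal (c n) * emeasure lborel (ball (0::'a) (D / 2 ^ n)))"
    by (simp add: nn_integral_cmult_indicator)
  also have "\<dots> = (\<Sum>n. ennreal (2 ^ N * D * (1/2) ^ Suc n * unit_ball_vol N))"
  proof (rule suminf_cong)
    fix n
    have ball: "emeasure lborel (ball (0::'a) (D / 2 ^ n)) = ennreal (unit_ball_vol N * (D / 2 ^ n) ^ N)"
      using assms by (simp add: emeasure_ball N_def)
    have mult: "ennreal (c n) * ennreal (unit_ball_vol N * (D / 2 ^ n) ^ N)
        = ennreal (c n * (unit_ball_vol N * (D / 2 ^ n) ^ N))"
      by (rule ennreal_mult'[symmetric]) (simp add: c_def)
    have "c n * (unit_ball_vol N * (D / 2 ^ n) ^ N) = 2 ^ N * D * (1/2) ^ Suc n * unit_ball_vol N"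
      using dyadic_powr_mult_power[OF assms, of n N] by (simp add: c_def mult_ac)
    then show "ennreal (c n) * emeasure lborel (ball (0::'a) (D / 2 ^ n))
        = ennreal (2 ^ N * D * (1/2) ^ Suc n * unit_ball_vol N)"
      by (simp only: ball mult)
  qed
  also have "\<dots> < \<infinity>"
  proof -
    have "summable (\<lambda>n. 2 ^ N * D * (1/2::real) ^ Suc n * unit_ball_vol N)"
      by (intro summable_mult2 summable_mult) (simp add: summable_geometric_iff)
    then show ?thesis using assms by (auto simp: ennreal_suminf_neq_top top.not_eq_extremum)
  qed
  finally show ?thesis by (simp add: N_def)
qed

lemma abs_coulomb_le_norm_powr:
  "\<exists>c\<ge>0. \<forall>z::'a::euclidean_space. 0 < norm z \<and> norm z < 1 \<longrightarrow>
      \<bar>coulomb z\<bar> \<le> c * norm z powr (1 - real DIM('a))"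
proof -
  consider "DIM('a) = 1" | "DIM('a) = 2" | "DIM('a) \<ge> 3"
    using DIM_positive[where 'a='a] by linarith
  then show ?thesis
  proof cases
    case 1
    then show ?thesis by (intro exI[of _ "1/2"]) (simp add: coulomb_def)
  next
    case 2
    have "\<bar>coulomb z\<bar> \<le> 1 / (2 * pi) * norm z powr (1 - real DIM('a))"
      if z: "0 < norm z" "norm z < 1" for z :: 'a
    proof -
      have "- ln (norm z) = ln (1 / norm z)" using z by (simp add: ln_div)
      also have "\<dots> \<le> 1 / norm z" using z ln_le_minus_one[of "1 / norm z"] by simp
      finally have "- ln (norm z) / (2 * pi) \<le> (1 / norm z) / (2 * pi)"
        by (intro divide_right_mono) auto
      moreover have "\<bar>coulomb z\<bar> = - ln (norm z) / (2 * pi)"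
        using 2 z by (simp add: coulomb_def abs_mult)
      moreover have "norm z powr (1 - real DIM('a)) = 1 / norm z"
        using 2 z by (simp add: powr_minus_divide)
      ultimately show ?thesis by (simp add: mult.commute)
    qed
    then show ?thesis by (intro exI[of _ "1 / (2 * pi)"]) auto
  next
    case 3
    define c where "c = 1 / ((real DIM('a) - 2) * omega_N TYPE('a))"
    have c: "0 \<le> c" using 3 by (simp add: c_def omega_N_def)
    have "\<bar>coulomb z\<bar> \<le> c * norm z powr (1 - real DIM('a))"
      if z: "0 < norm z" "norm z < 1" for z :: 'a
    proof -
      have "\<bar>coulomb z\<bar> = c * norm z powr (2 - real DIM('a))"
        using 3 c by (simp add: coulomb_def c_def[symmetric] abs_mult)
      also have "\<dots> \<le> c * norm z powr (1 - real DIM('a))"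
        using z c by (intro mult_left_mono powr_mono') auto
      finally show ?thesis .
    qed
    with c show ?thesis by blast
  qed
qed

lemma admissible_kernel_le_norm_powr:
  fixes K :: "'a::euclidean_space \<Rightarrow> real"
  assumes "admissible \<Omega> K" and "0 < D"
  obtains C1 C2 where "0 \<le> C1" and "0 \<le> C2"
    and "\<And>z. z \<noteq> 0 \<Longrightarrow> norm z < D \<Longrightarrow> \<bar>K z\<bar> \<le> C1 * norm z powr (1 - real DIM('a)) + C2"
proof -
  obtain k C \<delta> where radial: "\<forall>x. x \<noteq> 0 \<longrightarrow> K x = k (norm x)"
    and nonincreasing: "\<forall>s t. 0 < s \<longrightarrow> s \<le> t \<longrightarrow> k t \<le> k s"
    and "0 < \<delta>" and near_0: "\<forall>x. 0 < norm x \<and> norm x < \<delta> \<longrightarrow> \<bar>K x\<bar> \<le> C * \<bar>coulomb x\<bar>"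
    using assms(1) unfolding admissible_def by blast
  obtain c where "0 \<le> c" and coulomb_le: "\<forall>z::'a. 0 < norm z \<and> norm z < 1 \<longrightarrow>
      \<bar>coulomb z\<bar> \<le> c * norm z powr (1 - real DIM('a))"
    using abs_coulomb_le_norm_powr by blast
  define d where "d = min \<delta> 1"
  have d: "0 < d" "d \<le> \<delta>" "d \<le> 1" using \<open>0 < \<delta>\<close> by (auto simp: d_def)
  have "\<bar>K z\<bar> \<le> \<bar>C\<bar> * c * norm z powr (1 - real DIM('a)) + (\<bar>k D\<bar> + \<bar>k d\<bar>)"
    if z: "z \<noteq> 0" "norm z < D" for z :: 'a
  proof (cases "norm z < d")
    case True
    have "\<bar>K z\<bar> \<le> C * \<bar>coulomb z\<bar>" using near_0 True d z by auto
    also have "\<dots> \<le> \<bar>C\<bar> * \<bar>coulomb z\<bar>" by (intro mult_right_mono) auto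
    also have "\<dots> \<le> \<bar>C\<bar> * (c * norm z powr (1 - real DIM('a)))"
      using coulomb_le True d z by (intro mult_left_mono) auto
    finally show ?thesis by (simp add: mult.assoc)
  next
    case False
    then have "k D \<le> k (norm z)" "k (norm z) \<le> k d"
      using nonincreasing d z by auto
    then have "\<bar>K z\<bar> \<le> \<bar>k D\<bar> + \<bar>k d\<bar>" using radial z by auto
    moreover have "0 \<le> \<bar>C\<bar> * c * norm z powr (1 - real DIM('a))" using \<open>0 \<le> c\<close> by simp
    ultimately show ?thesis by linarith
  qed
  with \<open>0 \<le> c\<close> show ?thesis using that[of "\<bar>C\<bar> * c" "\<bar>k D\<bar> + \<bar>k d\<bar>"] by auto
qed

lemma nn_integral_admissible_kernel_ball_finite:
  fixes K :: "'a::euclidean_space \<Rightarrow> real"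
  assumes "admissible \<Omega> K" and "0 < D"
  shows "(\<integral>\<^sup>+ z. ennreal \<bar>K z\<bar> * indicator (ball 0 D) z \<partial>lborel) < \<infinity>"
proof -
  define p where "p = 1 - real DIM('a)"
  obtain C1 C2 where C: "0 \<le> C1" "0 \<le> C2"
    and K_le: "\<And>z. z \<noteq> 0 \<Longrightarrow> norm z < D \<Longrightarrow> \<bar>K z\<bar> \<le> C1 * norm z powr p + C2"
    using admissible_kernel_le_norm_powr[OF assms] unfolding p_def by blast
  have [measurable]: "(\<lambda>z::'a. norm z powr p) \<in> borel_measurable borel"
    by (intro powr_real_measurable) auto
  have [measurable]: "ball (0::'a) D \<in> sets borel" by simp
  have "(\<integral>\<^sup>+ z. ennreal \<bar>K z\<bar> * indicator (ball 0 D) z \<partial>lborel)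
      \<le> (\<integral>\<^sup>+ z. ennreal C1 * (indicator (ball 0 D) z * ennreal (norm z powr p))
                 + ennreal C2 * indicator (ball (0::'a) D) z \<partial>lborel)"
  proof (rule nn_integral_mono_AE)
    show "AE z in lborel. ennreal \<bar>K z\<bar> * indicator (ball 0 D) z
        \<le> ennreal C1 * (indicator (ball 0 D) z * ennreal (norm z powr p)) + ennreal C2 * indicator (ball 0 D) z"
      using AE_lborel_singleton[of 0]
    proof eventually_elim
      case (elim z)
      then show ?case
        using K_le[of z] C
        by (auto simp: indicator_def ennreal_plus[symmetric] ennreal_mult[symmetric]
            simp del: ennreal_plus intro!: ennreal_leI)
    qed
  qed
  also have "\<dots> = ennreal C1 * (\<integral>\<^sup>+ z. indicator (ball (0::'a) D) z * ennreal (norm z powr p) \<partial>lborel)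
      + ennreal C2 * emeasure lborel (ball (0::'a) D)"
    by (subst nn_integral_add) (measurable, simp add: nn_integral_cmult nn_integral_cmult_indicator)
  also have "\<dots> < \<infinity>"
    using nn_integral_norm_powr_ball_finite[OF assms(2), where 'a='a] emeasure_lborel_ball_finite[of "0::'a" D]
    by (simp add: p_def ennreal_mult_less_top ennreal_mult_eq_top_iff)
  finally show ?thesis .
qed

locale admissible_kernel =
  fixes \<Omega> :: "'a::euclidean_space set" and K :: "'a \<Rightarrow> real"
  assumes open_domain: "open \<Omega>" and bounded_domain: "bounded \<Omega>" and admissible: "admissible \<Omega> K"
begin

abbreviation "\<mu> \<equiv> lebesgue_on \<Omega>"

lemma sets_lebesgue_domain [measurable]: "\<Omega> \<in> sets lebesgue"
  using open_domain by (simp add: borel_open sets_completionI_sets)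

sublocale domain: finite_measure \<mu>
proof
  have "emeasure \<mu> (space \<mu>) = emeasure lebesgue \<Omega>" by (simp add: emeasure_restrict_space)
  also have "\<dots> < \<infinity>"
    using bounded_set_imp_lmeasurable[OF bounded_domain sets_lebesgue_domain] by (simp add: fmeasurable_def)
  finally show "emeasure \<mu> (space \<mu>) \<noteq> \<infinity>" by simp
qed

lemma measure_domain: "measure \<mu> \<Omega> = measure lebesgue \<Omega>"
  by (simp add: measure_restrict_space)

lemma kernel_borel_measurable [measurable]: "K \<in> borel_measurable borel"
  using admissible radial_nonincreasing_borel_measurable unfolding admissible_def by blast

lemma kernel_diff_commute: "K (x - y) = K (y - x)"
proof (cases "x = y")
  case False
  obtain k where "\<forall>x. x \<noteq> 0 \<longrightarrow> K x = k (norm x)" using admissible unfolding admissible_def by blast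
  with False show ?thesis by (simp add: norm_minus_commute)
qed simp

lemma kernel_translate_measurable [measurable]: "(\<lambda>y. K (x - y)) \<in> borel_measurable \<mu>"
  by (intro measurable_compose[OF _ kernel_borel_measurable] continuous_imp_measurable_on_sets_lebesgue)
    (auto intro!: continuous_intros)

lemma kernel_pair_measurable:
  "(\<lambda>(x, y). K (x - y)) \<in> borel_measurable (\<mu> \<Otimes>\<^sub>M \<mu>)"
proof -
  have "(\<lambda>p::'a \<times> 'a. fst p - snd p) \<in> borel_measurable (\<mu> \<Otimes>\<^sub>M \<mu>)"
    by (intro borel_measurable_diff
        measurable_compose[OF measurable_fst id_borel_measurable_lebesgue_on[unfolded id_def]]
        measurable_compose[OF measurable_snd id_borel_measurable_lebesgue_on[unfolded id_def]])
  then show ?thesis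
    using measurable_compose[OF _ kernel_borel_measurable] by (simp add: o_def case_prod_beta')
qed

lemma nn_integral_kernel_translate_bounded:
  obtains C where "0 \<le> C" and "\<forall>x\<in>\<Omega>. (\<integral>\<^sup>+ y. ennreal \<bar>K (x - y)\<bar> \<partial>\<mu>) \<le> ennreal C"
proof -
  obtain R where "0 < R" and \<Omega>_ball: "\<Omega> \<subseteq> ball 0 R"
    using bounded_domain bounded_subset_ballD by blast
  define g where "g z = ennreal \<bar>K z\<bar> * indicator (ball 0 (2 * R)) z" for z
  have [measurable]: "ball (0::'a) (2 * R) \<in> sets borel" by simp
  have [measurable]: "g \<in> borel_measurable borel" unfolding g_def by measurable
  have "integral\<^sup>N lborel g < \<infinity>"
    unfolding g_def using nn_integral_admissible_kernel_ball_finite[OF admissible] \<open>0 < R\<close> by simp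
  moreover define C where "C = enn2real (integral\<^sup>N lborel g)"
  ultimately have C: "0 \<le> C" "integral\<^sup>N lborel g = ennreal C" by (simp_all add: less_top)
  have "(\<integral>\<^sup>+ y. ennreal \<bar>K (x - y)\<bar> \<partial>\<mu>) \<le> ennreal C" if x: "x \<in> \<Omega>" for x
  proof -
    have "(\<integral>\<^sup>+ y. ennreal \<bar>K (x - y)\<bar> \<partial>\<mu>) = (\<integral>\<^sup>+ y. ennreal \<bar>K (x - y)\<bar> * indicator \<Omega> y \<partial>lebesgue)"
      by (rule nn_integral_restrict_space) simp
    also have "\<dots> = (\<integral>\<^sup>+ y. ennreal \<bar>K (x - y)\<bar> * indicator \<Omega> y \<partial>lborel)"
      by (simp add: nn_integral_completion)
    also have "\<dots> \<le> (\<integral>\<^sup>+ y. g (- x + y) \<partial>lborel)"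
    proof (intro nn_integral_mono)
      fix y
      have "norm (- x + y) < 2 * R" if "y \<in> \<Omega>"
      proof -
        have "norm x < R" "norm y < R" using \<Omega>_ball x that by auto
        then show ?thesis using norm_triangle_ineq4[of y x] by simp
      qed
      then show "ennreal \<bar>K (x - y)\<bar> * indicator \<Omega> y \<le> g (- x + y)"
        by (auto simp: g_def indicator_def kernel_diff_commute[of x y])
    qed
    also have "\<dots> = (\<integral>\<^sup>+ z. g z \<partial>distr lborel borel ((+) (- x)))"
      by (subst nn_integral_distr) auto
    also have "\<dots> = ennreal C" by (simp add: lborel_distr_plus C)
    finally show ?thesis .
  qed
  with C that show ?thesis by blast
qed

definition bounded_measurable :: "('a \<Rightarrow> real) \<Rightarrow> bool" where
  "bounded_measurable f \<longleftrightarrow> f \<in> borel_measurable \<mu> \<and> bounded (f ` \<Omega>)"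

lemma bounded_measurableI:
  "f \<in> borel_measurable \<mu> \<Longrightarrow> (\<And>x. x \<in> \<Omega> \<Longrightarrow> \<bar>f x\<bar> \<le> B) \<Longrightarrow> bounded_measurable f"
  unfolding bounded_measurable_def bounded_iff by auto

lemma bounded_measurableE:
  assumes "bounded_measurable f"
  obtains B where "0 \<le> B" and "\<forall>x\<in>\<Omega>. \<bar>f x\<bar> \<le> B" and "f \<in> borel_measurable \<mu>"
  using assms unfolding bounded_measurable_def bounded_pos by (auto intro: less_imp_le)

lemma bounded_measurable_const: "bounded_measurable (\<lambda>x. c)"
  by (rule bounded_measurableI[where B="\<bar>c\<bar>"]) auto

lemma bounded_measurable_add:
  "bounded_measurable f \<Longrightarrow> bounded_measurable g \<Longrightarrow> bounded_measurable (\<lambda>x. f x + g x)"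
  unfolding bounded_measurable_def by (auto intro: bounded_plus_comp)

lemma bounded_measurable_diff:
  "bounded_measurable f \<Longrightarrow> bounded_measurable g \<Longrightarrow> bounded_measurable (\<lambda>x. f x - g x)"
  unfolding bounded_measurable_def by (auto intro: bounded_minus_comp)

lemma bounded_measurable_mult:
  "bounded_measurable f \<Longrightarrow> bounded_measurable g \<Longrightarrow> bounded_measurable (\<lambda>x. f x * g x)"
  unfolding bounded_measurable_def by (auto intro: bounded_mult_comp)

lemma bounded_measurable_indicator: "A \<in> sets \<mu> \<Longrightarrow> bounded_measurable (indicator A)"
  by (rule bounded_measurableI[where B=1]) (auto simp: indicator_def)

lemma integrable_bounded_measurable:
  assumes "bounded_measurable f"
  shows "integrable \<mu> f"
proof -
  obtain B where "0 \<le> B" "\<forall>x\<in>\<Omega>. \<bar>f x\<bar> \<le> B" "f \<in> borel_measurable \<mu>"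
    by (rule bounded_measurableE[OF assms])
  then show ?thesis by (intro domain.integrable_const_bound[where B=B]) auto
qed

lemma nn_integral_kernel_mult_bounded:
  assumes "bounded_measurable g"
  obtains C where "0 \<le> C" and "\<forall>x\<in>\<Omega>. (\<integral>\<^sup>+ y. ennreal \<bar>K (x - y) * g y\<bar> \<partial>\<mu>) \<le> ennreal C"
proof -
  obtain G where "0 \<le> G" and G: "\<forall>y\<in>\<Omega>. \<bar>g y\<bar> \<le> G" and "g \<in> borel_measurable \<mu>"
    by (rule bounded_measurableE[OF assms])
  obtain C where "0 \<le> C" and C: "\<forall>x\<in>\<Omega>. (\<integral>\<^sup>+ y. ennreal \<bar>K (x - y)\<bar> \<partial>\<mu>) \<le> ennreal C"
    by (rule nn_integral_kernel_translate_bounded)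
  have "(\<integral>\<^sup>+ y. ennreal \<bar>K (x - y) * g y\<bar> \<partial>\<mu>) \<le> ennreal (G * C)" if x: "x \<in> \<Omega>" for x
  proof -
    have "(\<integral>\<^sup>+ y. ennreal \<bar>K (x - y) * g y\<bar> \<partial>\<mu>) \<le> (\<integral>\<^sup>+ y. ennreal G * ennreal \<bar>K (x - y)\<bar> \<partial>\<mu>)"
    proof (rule nn_integral_mono)
      fix y assume "y \<in> space \<mu>"
      then have "\<bar>K (x - y)\<bar> * \<bar>g y\<bar> \<le> G * \<bar>K (x - y)\<bar>" using G by (simp add: mult.commute mult_right_mono)
      then show "ennreal \<bar>K (x - y) * g y\<bar> \<le> ennreal G * ennreal \<bar>K (x - y)\<bar>"
        using \<open>0 \<le> G\<close> by (simp add: abs_mult ennreal_mult[symmetric] ennreal_leI)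
    qed
    also have "\<dots> = ennreal G * (\<integral>\<^sup>+ y. ennreal \<bar>K (x - y)\<bar> \<partial>\<mu>)" by (rule nn_integral_cmult) simp
    also have "\<dots> \<le> ennreal G * ennreal C" using C x by (intro mult_left_mono) auto
    finally show ?thesis using \<open>0 \<le> G\<close> by (simp add: ennreal_mult')
  qed
  with \<open>0 \<le> G\<close> \<open>0 \<le> C\<close> show ?thesis by (intro that[of "G * C"]) auto
qed

lemma integrable_kernel_mult:
  assumes "bounded_measurable g" and "x \<in> \<Omega>"
  shows "integrable \<mu> (\<lambda>y. K (x - y) * g y)"
proof (rule integrableI_bounded)
  show "(\<lambda>y. K (x - y) * g y) \<in> borel_measurable \<mu>"
    using assms(1) by (auto simp: bounded_measurable_def)
  obtain C where "\<forall>x\<in>\<Omega>. (\<integral>\<^sup>+ y. ennreal \<bar>K (x - y) * g y\<bar> \<partial>\<mu>) \<le> ennreal C"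
    using nn_integral_kernel_mult_bounded[OF assms(1)] by blast
  with assms(2) have "(\<integral>\<^sup>+ y. ennreal (norm (K (x - y) * g y)) \<partial>\<mu>) \<le> ennreal C" by simp
  then show "(\<integral>\<^sup>+ y. ennreal (norm (K (x - y) * g y)) \<partial>\<mu>) < \<infinity>"
    by (metis ennreal_less_top infinity_ennreal_def le_less_trans)
qed

lemma borel_measurable_conv:
  assumes [measurable]: "g \<in> borel_measurable \<mu>"
  shows "conv \<Omega> K g \<in> borel_measurable \<mu>"
proof -
  have "(\<lambda>(x, y). K (x - y) * g y) \<in> borel_measurable (\<mu> \<Otimes>\<^sub>M \<mu>)"
    using borel_measurable_times[OF kernel_pair_measurable, of "\<lambda>(x, y). g y"]
    by (simp add: case_prod_beta')
  then show ?thesis unfolding conv_def by (rule domain.borel_measurable_lebesgue_integral)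
qed

lemma bounded_measurable_conv:
  assumes "bounded_measurable g"
  shows "bounded_measurable (conv \<Omega> K g)"
proof -
  obtain C where "0 \<le> C" and C: "\<forall>x\<in>\<Omega>. (\<integral>\<^sup>+ y. ennreal \<bar>K (x - y) * g y\<bar> \<partial>\<mu>) \<le> ennreal C"
    using nn_integral_kernel_mult_bounded[OF assms] by blast
  have "\<bar>conv \<Omega> K g x\<bar> \<le> C" if x: "x \<in> \<Omega>" for x
  proof -
    have "ennreal \<bar>conv \<Omega> K g x\<bar> \<le> (\<integral>\<^sup>+ y. ennreal (norm (K (x - y) * g y)) \<partial>\<mu>)"
      unfolding conv_def using integrable_kernel_mult[OF assms x]
      by (metis integral_norm_bound_ennreal real_norm_def)
    also have "\<dots> \<le> ennreal C" using C x by simp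
    finally show ?thesis using \<open>0 \<le> C\<close> by (simp add: ennreal_le_iff)
  qed
  moreover have "conv \<Omega> K g \<in> borel_measurable \<mu>"
    using assms by (auto simp: bounded_measurable_def intro: borel_measurable_conv)
  ultimately show ?thesis by (intro bounded_measurableI)
qed

lemma integrable_kernel_pair:
  assumes f: "bounded_measurable f" and g: "bounded_measurable g"
  shows "integrable (\<mu> \<Otimes>\<^sub>M \<mu>) (\<lambda>(x, y). f x * (K (x - y) * g y))"
proof -
  interpret pair: pair_sigma_finite \<mu> \<mu> ..
  obtain F where "0 \<le> F" and F: "\<forall>x\<in>\<Omega>. \<bar>f x\<bar> \<le> F" and [measurable]: "f \<in> borel_measurable \<mu>"
    by (rule bounded_measurableE[OF f])
  obtain C where "0 \<le> C" and C: "\<forall>x\<in>\<Omega>. (\<integral>\<^sup>+ y. ennreal \<bar>K (x - y) * g y\<bar> \<partial>\<mu>) \<le> ennreal C"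
    using nn_integral_kernel_mult_bounded[OF g] by blast
  have [measurable]: "g \<in> borel_measurable \<mu>" using g by (simp add: bounded_measurable_def)
  have h [measurable]: "(\<lambda>(x, y). f x * (K (x - y) * g y)) \<in> borel_measurable (\<mu> \<Otimes>\<^sub>M \<mu>)"
    using borel_measurable_times[OF _ kernel_pair_measurable, of "\<lambda>(x, y). f x * g y"]
    by (simp add: case_prod_beta' mult_ac)
  have [measurable]: "(\<lambda>x. \<integral>y. norm (f x * (K (x - y) * g y)) \<partial>\<mu>) \<in> borel_measurable \<mu>"
    using h by (intro domain.borel_measurable_lebesgue_integral) (simp add: case_prod_beta')
  show ?thesis
  proof (rule pair.Fubini_integrable)
    have "norm (\<integral>y. norm (f x * (K (x - y) * g y)) \<partial>\<mu>) \<le> F * C" if x: "x \<in> \<Omega>" for x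
    proof -
      have "ennreal (\<integral>y. norm (K (x - y) * g y) \<partial>\<mu>) \<le> ennreal C"
        using C x integrable_kernel_mult[OF g x] by (simp add: nn_integral_eq_integral[symmetric])
      then have "(\<integral>y. \<bar>K (x - y) * g y\<bar> \<partial>\<mu>) \<le> C" using \<open>0 \<le> C\<close> by (simp add: ennreal_le_iff)
      then show ?thesis using F x \<open>0 \<le> F\<close> by (simp add: abs_mult mult_mono)
    qed
    then show "integrable \<mu> (\<lambda>x. \<integral>y. norm (case_prod (\<lambda>x y. f x * (K (x - y) * g y)) (x, y)) \<partial>\<mu>)"
      by (intro domain.integrable_const_bound[where B="F * C"] AE_I2) auto
    show "AE x in \<mu>. integrable \<mu> (\<lambda>y. case_prod (\<lambda>x y. f x * (K (x - y) * g y)) (x, y))"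
      using integrable_kernel_mult[OF g] by (intro AE_I2) simp
  qed (rule h)
qed

lemma conv_symmetric:
  assumes f: "bounded_measurable f" and g: "bounded_measurable g"
  shows "(\<integral>x. f x * conv \<Omega> K g x \<partial>\<mu>) = (\<integral>y. g y * conv \<Omega> K f y \<partial>\<mu>)"
proof -
  interpret pair: pair_sigma_finite \<mu> \<mu> ..
  have "(\<integral>y. (\<integral>x. f x * (K (x - y) * g y) \<partial>\<mu>) \<partial>\<mu>) = (\<integral>x. (\<integral>y. f x * (K (x - y) * g y) \<partial>\<mu>) \<partial>\<mu>)"
    using integrable_kernel_pair[OF f g] by (rule pair.Fubini_integral)
  moreover have "(\<integral>x. f x * (K (x - y) * g y) \<partial>\<mu>) = g y * conv \<Omega> K f y" for y
  proof -
    have "(\<integral>x. f x * (K (x - y) * g y) \<partial>\<mu>) = (\<integral>x. g y * (K (y - x) * f x) \<partial>\<mu>)"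
      by (rule Bochner_Integration.integral_cong) (auto simp: kernel_diff_commute[of _ y])
    then show ?thesis by (simp add: conv_def)
  qed
  ultimately show ?thesis by (simp add: conv_def)
qed

lemma conv_add_scaled:
  assumes "bounded_measurable g1" and "bounded_measurable g2" and "x \<in> \<Omega>"
  shows "conv \<Omega> K (\<lambda>y. g1 y + c * g2 y) x = conv \<Omega> K g1 x + c * conv \<Omega> K g2 x"
  using integrable_kernel_mult[OF assms(1,3)] integrable_kernel_mult[OF assms(2,3)]
  by (simp add: conv_def distrib_left mult.left_commute)

lemma conv_cong_AE:
  assumes "g1 \<in> borel_measurable \<mu>" and "g2 \<in> borel_measurable \<mu>" and "AE y in \<mu>. g1 y = g2 y"
  shows "conv \<Omega> K g1 x = conv \<Omega> K g2 x"
  unfolding conv_def by (rule integral_cong_AE) (use assms in auto)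

lemma admissible_set_representative:
  assumes "(r, b) \<in> admissible_set \<Omega> mr mb"
  obtains r0 b0 where "r0 \<in> borel_measurable \<mu>" and "b0 \<in> borel_measurable \<mu>"
    and "\<forall>x\<in>\<Omega>. 0 \<le> r0 x \<and> 0 \<le> b0 x \<and> r0 x + b0 x \<le> 1"
    and "AE x in \<mu>. r0 x = r x" and "AE x in \<mu>. b0 x = b x"
proof -
  have [measurable]: "r \<in> borel_measurable \<mu>" "b \<in> borel_measurable \<mu>"
    using assms by (auto simp: admissible_set_def borel_measurable_integrable)
  define box where "box x \<longleftrightarrow> 0 \<le> r x \<and> 0 \<le> b x \<and> r x + b x \<le> 1" for x
  have "AE x in \<mu>. box x" using assms by (simp add: admissible_set_def box_def)
  then show ?thesis
    by (intro that[of "\<lambda>x. if box x then r x else 0" "\<lambda>x. if box x then b x else 0"])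
      (auto simp: box_def elim: AE_mp)
qed

lemma F_eps_cong_AE:
  assumes [measurable]: "r0 \<in> borel_measurable \<mu>" "r \<in> borel_measurable \<mu>"
    "b0 \<in> borel_measurable \<mu>" "b \<in> borel_measurable \<mu>"
    and "AE x in \<mu>. r0 x = r x" and "AE x in \<mu>. b0 x = b x"
  shows "F_eps \<epsilon> \<Omega> K c11 c22 r0 b0 = F_eps \<epsilon> \<Omega> K c11 c22 r b"
proof -
  have [measurable]: "conv \<Omega> K r \<in> borel_measurable \<mu>" "conv \<Omega> K b \<in> borel_measurable \<mu>"
    by (simp_all add: borel_measurable_conv)
  have "conv \<Omega> K r0 = conv \<Omega> K r" "conv \<Omega> K b0 = conv \<Omega> K b"
    using conv_cong_AE assms by blast+
  moreover have "F_E \<Omega> r0 b0 = F_E \<Omega> r b"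
    unfolding F_E_def by (rule integral_cong_AE) (measurable, use assms(5,6) in \<open>auto elim: AE_mp\<close>)
  moreover have "F_0 \<Omega> K c11 c22 r0 b0 = F_0 \<Omega> K c11 c22 r b"
    unfolding F_0_def calculation by (rule integral_cong_AE) (measurable, use assms(5,6) in \<open>auto elim: AE_mp\<close>)
  ultimately show ?thesis by (simp add: F_eps_def)
qed

end

section \<open>First variation at a minimizer\<close>

lemma F_eps_swap: "F_eps \<epsilon> \<Omega> K c22 c11 b r = F_eps \<epsilon> \<Omega> K c11 c22 r b"
proof -
  have "F_E \<Omega> b r = F_E \<Omega> r b"
    unfolding F_E_def by (rule Bochner_Integration.integral_cong) (simp_all add: algebra_simps)
  moreover have "F_0 \<Omega> K c22 c11 b r = F_0 \<Omega> K c11 c22 r b"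
    unfolding F_0_def by (rule Bochner_Integration.integral_cong) (simp_all add: algebra_simps)
  ultimately show ?thesis by (simp add: F_eps_def)
qed

lemma admissible_set_swap: "(b, r) \<in> admissible_set \<Omega> mb mr \<longleftrightarrow> (r, b) \<in> admissible_set \<Omega> mr mb"
  by (auto simp: admissible_set_def add.commute)

locale minimizer = admissible_kernel +
  fixes \<epsilon> c11 c22 mr mb :: real and r b :: "'a \<Rightarrow> real"
  assumes eps_pos: "0 < \<epsilon>" and mr_pos: "0 < mr" and mb_pos: "0 < mb"
    and mass_lt: "mr + mb < measure lebesgue \<Omega>"
    and r_measurable [measurable]: "r \<in> borel_measurable \<mu>"
    and b_measurable [measurable]: "b \<in> borel_measurable \<mu>"
    and box: "\<And>x. x \<in> \<Omega> \<Longrightarrow> 0 \<le> r x \<and> 0 \<le> b x \<and> r x + b x \<le> 1"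
    and integral_r: "(\<integral>x. r x \<partial>\<mu>) = mr" and integral_b: "(\<integral>x. b x \<partial>\<mu>) = mb"
    and minimal: "\<And>r' b'. (r', b') \<in> admissible_set \<Omega> mr mb \<Longrightarrow>
      F_eps \<epsilon> \<Omega> K c11 c22 r b \<le> F_eps \<epsilon> \<Omega> K c11 c22 r' b'"
begin

definition potential :: "'a \<Rightarrow> real" where
  "potential x = 2 * (c11 * conv \<Omega> K r x - conv \<Omega> K b x)"

text \<open>
  The derivative of the energy density with respect to \<open>r\<close>, at density \<open>s\<close> and with the
  convolution terms frozen at the minimizer.
\<close>
definition chem_pot :: "real \<Rightarrow> 'a \<Rightarrow> real" where
  "chem_pot s x = \<epsilon> * (ln s - ln (1 - (s + b x))) + potential x"

lemmas bounded_measurable_arith =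
  bounded_measurable_const bounded_measurable_add bounded_measurable_diff bounded_measurable_mult

lemma bounded_measurable_r: "bounded_measurable r"
proof (rule bounded_measurableI[where B=1])
  fix x assume "x \<in> \<Omega>"
  with box[OF this] show "\<bar>r x\<bar> \<le> 1" by auto
qed simp

lemma bounded_measurable_b: "bounded_measurable b"
proof (rule bounded_measurableI[where B=1])
  fix x assume "x \<in> \<Omega>"
  with box[OF this] show "\<bar>b x\<bar> \<le> 1" by auto
qed simp

lemma bounded_measurable_potential: "bounded_measurable potential"
  unfolding potential_def
  by (intro bounded_measurable_arith bounded_measurable_conv bounded_measurable_r bounded_measurable_b)

lemma potential_measurable [measurable]: "potential \<in> borel_measurable \<mu>"
  using bounded_measurable_potential by (simp add: bounded_measurable_def)

lemma integral_mult_potential: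
  assumes "bounded_measurable \<psi>"
  shows "(\<integral>x. \<psi> x * potential x \<partial>\<mu>)
    = 2 * c11 * (\<integral>x. \<psi> x * conv \<Omega> K r x \<partial>\<mu>) - 2 * (\<integral>x. \<psi> x * conv \<Omega> K b x \<partial>\<mu>)"
proof -
  have "(\<integral>x. \<psi> x * potential x \<partial>\<mu>)
      = (\<integral>x. 2 * c11 * (\<psi> x * conv \<Omega> K r x) - 2 * (\<psi> x * conv \<Omega> K b x) \<partial>\<mu>)"
    by (rule Bochner_Integration.integral_cong) (simp_all add: potential_def algebra_simps)
  also have "\<dots> = 2 * c11 * (\<integral>x. \<psi> x * conv \<Omega> K r x \<partial>\<mu>) - 2 * (\<integral>x. \<psi> x * conv \<Omega> K b x \<partial>\<mu>)"
    using assms bounded_measurable_r bounded_measurable_b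
    by (simp add: integrable_bounded_measurable bounded_measurable_mult bounded_measurable_conv)
  finally show ?thesis .
qed

lemma interaction_energy_perturb:
  assumes \<psi>: "bounded_measurable \<psi>"
  shows "F_0 \<Omega> K c11 c22 (\<lambda>x. r x + t * \<psi> x) b = F_0 \<Omega> K c11 c22 r b
    + t * (\<integral>x. \<psi> x * potential x \<partial>\<mu>) + t\<^sup>2 * (c11 * (\<integral>x. \<psi> x * conv \<Omega> K \<psi> x \<partial>\<mu>))"
proof -
  define A B A\<psi> where "A = conv \<Omega> K r" and "B = conv \<Omega> K b" and "A\<psi> = conv \<Omega> K \<psi>"
  define I where "I x = c11 * r x * A x - r x * B x - b x * A x + c22 * b x * B x" for x
  define X where "X x = c11 * (r x * A\<psi> x + \<psi> x * A x) - \<psi> x * B x - b x * A\<psi> x" for x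
  define Y where "Y x = c11 * (\<psi> x * A\<psi> x)" for x
  have bm: "bounded_measurable A" "bounded_measurable B" "bounded_measurable A\<psi>"
    unfolding A_def B_def A\<psi>_def using \<psi> bounded_measurable_r bounded_measurable_b
    by (auto intro: bounded_measurable_conv)
  note int = integrable_bounded_measurable[OF bounded_measurable_mult]
  have "F_0 \<Omega> K c11 c22 (\<lambda>x. r x + t * \<psi> x) b = (\<integral>x. I x + t * X x + t\<^sup>2 * Y x \<partial>\<mu>)"
    unfolding F_0_def
  proof (rule Bochner_Integration.integral_cong[OF refl])
    fix x assume "x \<in> space \<mu>"
    then have "conv \<Omega> K (\<lambda>y. r y + t * \<psi> y) x = A x + t * A\<psi> x"
      unfolding A_def A\<psi>_def using conv_add_scaled[OF bounded_measurable_r \<psi>] by simp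
    then show "c11 * (r x + t * \<psi> x) * conv \<Omega> K (\<lambda>y. r y + t * \<psi> y) x - (r x + t * \<psi> x) * conv \<Omega> K b x
        - b x * conv \<Omega> K (\<lambda>y. r y + t * \<psi> y) x + c22 * b x * conv \<Omega> K b x = I x + t * X x + t\<^sup>2 * Y x"
      by (simp add: I_def X_def Y_def B_def power2_eq_square algebra_simps)
  qed
  also have "\<dots> = (\<integral>x. I x \<partial>\<mu>) + t * (\<integral>x. X x \<partial>\<mu>) + t\<^sup>2 * (\<integral>x. Y x \<partial>\<mu>)"
    unfolding I_def X_def Y_def
    using bm \<psi> bounded_measurable_r bounded_measurable_b
    by (simp add: int bounded_measurable_arith)
  also have "(\<integral>x. I x \<partial>\<mu>) = F_0 \<Omega> K c11 c22 r b" by (simp add: F_0_def I_def A_def B_def)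
  also have "(\<integral>x. X x \<partial>\<mu>) = (\<integral>x. \<psi> x * potential x \<partial>\<mu>)"
  proof -
    have X_int: "(\<integral>x. X x \<partial>\<mu>) = c11 * ((\<integral>x. r x * A\<psi> x \<partial>\<mu>) + (\<integral>x. \<psi> x * A x \<partial>\<mu>))
        - (\<integral>x. \<psi> x * B x \<partial>\<mu>) - (\<integral>x. b x * A\<psi> x \<partial>\<mu>)"
      unfolding X_def using bm \<psi> bounded_measurable_r bounded_measurable_b
      by (simp add: int bounded_measurable_arith)
    have "(\<integral>x. r x * A\<psi> x \<partial>\<mu>) = (\<integral>x. \<psi> x * A x \<partial>\<mu>)"
      unfolding A_def A\<psi>_def by (rule conv_symmetric[OF bounded_measurable_r \<psi>])
    moreover have "(\<integral>x. b x * A\<psi> x \<partial>\<mu>) = (\<integral>x. \<psi> x * B x \<partial>\<mu>)"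
      unfolding B_def A\<psi>_def by (rule conv_symmetric[OF bounded_measurable_b \<psi>])
    ultimately show ?thesis using X_int integral_mult_potential[OF \<psi>] by (simp add: A_def B_def)
  qed
  finally show ?thesis by (simp add: Y_def A\<psi>_def)
qed

lemma integrable_entropy_density:
  assumes "f \<in> borel_measurable \<mu>" and "g \<in> borel_measurable \<mu>"
    and "\<And>x. x \<in> \<Omega> \<Longrightarrow> 0 \<le> f x \<and> 0 \<le> g x \<and> f x + g x \<le> 1"
  shows "integrable \<mu> (\<lambda>x. entropy_density (f x) (g x))"
  using assms abs_entropy_density_le
  by (intro integrable_bounded_measurable bounded_measurableI[where B=3])
    (auto simp: entropy_density_def)

lemma F_E_eq_integral_entropy_density:
  "F_E \<Omega> f g = (\<integral>x. entropy_density (f x) (g x) \<partial>\<mu>)"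
  by (simp add: F_E_def entropy_density_def)

lemma perturbation_admissible:
  assumes "bounded_measurable \<psi>" and "(\<integral>x. \<psi> x \<partial>\<mu>) = 0"
    and "\<And>x. x \<in> \<Omega> \<Longrightarrow> 0 \<le> r x + \<psi> x \<and> r x + \<psi> x + b x \<le> 1"
  shows "(\<lambda>x. r x + \<psi> x, b) \<in> admissible_set \<Omega> mr mb"
proof -
  have "bounded_measurable (\<lambda>x. r x + \<psi> x)"
    using assms(1) bounded_measurable_r by (rule bounded_measurable_add[rotated])
  moreover have "(\<integral>x. r x + \<psi> x \<partial>\<mu>) = mr"
    using assms(1,2) integral_r integrable_bounded_measurable[OF bounded_measurable_r]
    by (simp add: integrable_bounded_measurable)
  moreover have "AE x in \<mu>. 0 \<le> r x + \<psi> x \<and> 0 \<le> b x \<and> r x + \<psi> x + b x \<le> 1"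
    using assms(3) box by (intro AE_I2) auto
  ultimately show ?thesis
    using integral_b integrable_bounded_measurable[OF bounded_measurable_b]
    by (auto simp: admissible_set_def integrable_bounded_measurable)
qed

lemma first_variation:
  assumes \<psi>: "bounded_measurable \<psi>" and "(\<integral>x. \<psi> x \<partial>\<mu>) = 0"
    and box': "\<And>x. x \<in> \<Omega> \<Longrightarrow> 0 \<le> r x + t * \<psi> x \<and> r x + t * \<psi> x + b x \<le> 1"
  shows "0 \<le> (\<integral>x. \<epsilon> * (entropy_density (r x + t * \<psi> x) (b x) - entropy_density (r x) (b x))
      + t * (\<psi> x * potential x) \<partial>\<mu>) + t\<^sup>2 * (c11 * (\<integral>x. \<psi> x * conv \<Omega> K \<psi> x \<partial>\<mu>))"
proof -
  have t\<psi>: "bounded_measurable (\<lambda>x. t * \<psi> x)" using \<psi> by (intro bounded_measurable_arith)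
  have perturbed_measurable: "(\<lambda>x. r x + t * \<psi> x) \<in> borel_measurable \<mu>"
    using bounded_measurable_add[OF bounded_measurable_r t\<psi>] by (simp add: bounded_measurable_def)
  have "(\<lambda>x. r x + t * \<psi> x, b) \<in> admissible_set \<Omega> mr mb"
    using assms t\<psi> by (intro perturbation_admissible) auto
  then have "F_eps \<epsilon> \<Omega> K c11 c22 r b \<le> F_eps \<epsilon> \<Omega> K c11 c22 (\<lambda>x. r x + t * \<psi> x) b"
    by (rule minimal)
  moreover have "integrable \<mu> (\<lambda>x. entropy_density (r x + t * \<psi> x) (b x))"
    using perturbed_measurable box box' by (intro integrable_entropy_density) auto
  moreover have "integrable \<mu> (\<lambda>x. entropy_density (r x) (b x))"
    using box by (intro integrable_entropy_density) auto
  moreover have "integrable \<mu> (\<lambda>x. \<psi> x * potential x)"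
    using \<psi> bounded_measurable_potential by (intro integrable_bounded_measurable bounded_measurable_mult)
  ultimately show ?thesis
    using interaction_energy_perturb[OF \<psi>, of t]
    by (simp add: F_eps_def F_E_eq_integral_entropy_density algebra_simps)
qed

lemma entropy_variation_le_chem_pot:
  assumes "x \<in> \<Omega>" and "0 < r x + d" and "r x + d + b x < 1"
  shows "\<epsilon> * (entropy_density (r x + d) (b x) - entropy_density (r x) (b x)) + d * potential x
    \<le> d * chem_pot (r x + d) x"
proof -
  have "entropy_density (r x + d) (b x) - entropy_density (r x) (b x)
      \<le> d * (ln (r x + d) - ln (1 - (r x + d + b x)))"
    using entropy_density_diff_le[of "r x + d" "b x" "r x"] assms box[OF assms(1)] by simp
  then show ?thesis
    using eps_pos by (simp add: chem_pot_def distrib_left mult.left_commute mult_left_mono)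
qed

text \<open>Adding \<open>t * transfer_direction U V\<close> to a density moves mass \<open>t\<close> from \<open>V\<close> to \<open>U\<close>.\<close>
definition transfer_direction :: "'a set \<Rightarrow> 'a set \<Rightarrow> 'a \<Rightarrow> real" where
  "transfer_direction U V x = indicator U x / measure \<mu> U - indicator V x / measure \<mu> V"

lemma bounded_measurable_transfer_direction:
  "U \<in> sets \<mu> \<Longrightarrow> V \<in> sets \<mu> \<Longrightarrow> bounded_measurable (transfer_direction U V)"
  unfolding transfer_direction_def divide_inverse
  by (intro bounded_measurable_arith bounded_measurable_indicator)

lemma Int_domain_absorb: "U \<in> sets \<mu> \<Longrightarrow> U \<inter> \<Omega> = U"
  using sets.sets_into_space[of U \<mu>] by auto

lemma integral_transfer_direction:
  assumes "U \<in> sets \<mu>" "0 < measure \<mu> U" "V \<in> sets \<mu>" "0 < measure \<mu> V"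
  shows "(\<integral>x. transfer_direction U V x \<partial>\<mu>) = 0"
  using assms integrable_bounded_measurable[OF bounded_measurable_indicator]
  by (simp add: transfer_direction_def Int_domain_absorb)

lemma transfer_variation_le:
  fixes U V :: "'a set" and t a c :: real
  defines "\<psi> \<equiv> transfer_direction U V"
  assumes "U \<inter> V = {}" and U: "0 < measure \<mu> U" and V: "0 < measure \<mu> V" and x: "x \<in> \<Omega>" and t: "0 < t"
    and room_U: "x \<in> U \<Longrightarrow> r x + t / measure \<mu> U + b x < 1"
    and room_V: "x \<in> V \<Longrightarrow> t / measure \<mu> V < r x"
    and bound_U: "x \<in> U \<Longrightarrow> chem_pot (r x + t / measure \<mu> U) x \<le> a"
    and bound_V: "x \<in> V \<Longrightarrow> - chem_pot (r x - t / measure \<mu> V) x \<le> c"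
  shows "0 \<le> r x + t * \<psi> x \<and> r x + t * \<psi> x + b x \<le> 1" (is ?box)
    and "\<epsilon> * (entropy_density (r x + t * \<psi> x) (b x) - entropy_density (r x) (b x)) + t * (\<psi> x * potential x)
      \<le> indicator U x * (t / measure \<mu> U * a) + indicator V x * (t / measure \<mu> V * c)" (is ?variation)
proof -
  define u v where "u = measure \<mu> U" and "v = measure \<mu> V"
  consider "x \<in> U" "x \<notin> V" | "x \<in> V" "x \<notin> U" | "x \<notin> U" "x \<notin> V" using \<open>U \<inter> V = {}\<close> by blast
  then have "?box \<and> ?variation"
  proof cases
    case 1
    have d: "0 < t / u" using t U by (simp add: u_def)
    have room: "r x + t / u + b x < 1" using room_U 1 by (simp add: u_def)
    have "\<epsilon> * (entropy_density (r x + t / u) (b x) - entropy_density (r x) (b x)) + t / u * potential x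
        \<le> t / u * chem_pot (r x + t / u) x"
      using d box[OF x] room by (intro entropy_variation_le_chem_pot[OF x]) auto
    also have "\<dots> \<le> t / u * a" using bound_U 1 d by (intro mult_left_mono) (auto simp: u_def)
    finally show ?thesis
      using 1 d room box[OF x] by (simp add: \<psi>_def transfer_direction_def u_def)
  next
    case 2
    have d: "0 < t / v" using t V by (simp add: v_def)
    have room: "t / v < r x" using room_V 2 by (simp add: v_def)
    have "\<epsilon> * (entropy_density (r x + - (t / v)) (b x) - entropy_density (r x) (b x))
        + - (t / v) * potential x \<le> - (t / v) * chem_pot (r x + - (t / v)) x"
      using d box[OF x] room by (intro entropy_variation_le_chem_pot[OF x]) auto
    also have "\<dots> = t / v * (- chem_pot (r x - t / v) x)" by simp
    also have "\<dots> \<le> t / v * c" using bound_V 2 d by (intro mult_left_mono) (auto simp: v_def)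
    finally show ?thesis
      using 2 d room box[OF x] by (simp add: \<psi>_def transfer_direction_def v_def)
  qed (use box[OF x] in \<open>simp add: \<psi>_def transfer_direction_def\<close>)
  then show ?box and ?variation by auto
qed

lemma transfer_first_variation:
  fixes U V :: "'a set" and t a c :: real
  defines "\<psi> \<equiv> transfer_direction U V"
  assumes U: "U \<in> sets \<mu>" "0 < measure \<mu> U" and V: "V \<in> sets \<mu>" "0 < measure \<mu> V"
    and "U \<inter> V = {}" and t: "0 < t"
    and room_U: "\<And>x. x \<in> U \<Longrightarrow> r x + t / measure \<mu> U + b x < 1"
    and room_V: "\<And>x. x \<in> V \<Longrightarrow> t / measure \<mu> V < r x"
    and bound_U: "\<And>x. x \<in> U \<Longrightarrow> chem_pot (r x + t / measure \<mu> U) x \<le> a"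
    and bound_V: "\<And>x. x \<in> V \<Longrightarrow> - chem_pot (r x - t / measure \<mu> V) x \<le> c"
  shows "0 \<le> a + c + t * (c11 * (\<integral>x. \<psi> x * conv \<Omega> K \<psi> x \<partial>\<mu>))"
proof -
  have \<psi>: "bounded_measurable \<psi>"
    unfolding \<psi>_def using U V by (intro bounded_measurable_transfer_direction)
  note transfer = transfer_variation_le[OF \<open>U \<inter> V = {}\<close> U(2) V(2) _ t, of _ a c,
      folded \<psi>_def, OF _ room_U room_V bound_U bound_V]
  define bound where "bound x = indicator U x * (t / measure \<mu> U * a)
    + indicator V x * (t / measure \<mu> V * c)" for x
  have "0 \<le> (\<integral>x. \<epsilon> * (entropy_density (r x + t * \<psi> x) (b x) - entropy_density (r x) (b x))
      + t * (\<psi> x * potential x) \<partial>\<mu>) + t\<^sup>2 * (c11 * (\<integral>x. \<psi> x * conv \<Omega> K \<psi> x \<partial>\<mu>))"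
    using \<psi> integral_transfer_direction[OF U V] transfer(1)
    by (intro first_variation) (auto simp: \<psi>_def)
  also have "(\<integral>x. \<epsilon> * (entropy_density (r x + t * \<psi> x) (b x) - entropy_density (r x) (b x))
      + t * (\<psi> x * potential x) \<partial>\<mu>) \<le> (\<integral>x. bound x \<partial>\<mu>)"
  proof (rule integral_mono)
    show "integrable \<mu> bound"
      unfolding bound_def using U V
      by (intro integrable_bounded_measurable bounded_measurable_arith bounded_measurable_indicator)
    have "bounded_measurable (\<lambda>x. r x + t * \<psi> x)"
      using \<psi> bounded_measurable_r by (intro bounded_measurable_arith)
    then show "integrable \<mu> (\<lambda>x. \<epsilon> * (entropy_density (r x + t * \<psi> x) (b x) - entropy_density (r x) (b x))
        + t * (\<psi> x * potential x))"
      using box transfer(1) \<psi> bounded_measurable_potential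
      by (intro Bochner_Integration.integrable_add integrable_mult_right Bochner_Integration.integrable_diff
          integrable_entropy_density integrable_bounded_measurable bounded_measurable_mult)
        (auto simp: bounded_measurable_def)
  qed (use transfer(2) in \<open>simp add: bound_def\<close>)
  also have "(\<integral>x. bound x \<partial>\<mu>) = t * a + t * c"
    using U V integrable_bounded_measurable[OF bounded_measurable_indicator]
    by (simp add: bound_def Int_domain_absorb)
  finally have "0 \<le> t * (a + c + t * (c11 * (\<integral>x. \<psi> x * conv \<Omega> K \<psi> x \<partial>\<mu>)))"
    by (simp add: power2_eq_square algebra_simps)
  with t show ?thesis by (simp add: zero_le_mult_iff)
qed

lemma mass_transfer:
  fixes \<alpha> \<beta> :: "real \<Rightarrow> real"
  assumes U: "U \<in> sets \<mu>" "0 < measure \<mu> U" and V: "V \<in> sets \<mu>" "0 < measure \<mu> V"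
    and "U \<inter> V = {}" and "0 < q\<^sub>U" and "0 < q\<^sub>V"
    and room_U: "\<And>q x. 0 < q \<Longrightarrow> q \<le> q\<^sub>U \<Longrightarrow> x \<in> U \<Longrightarrow> r x + q + b x < 1"
    and room_V: "\<And>q x. 0 < q \<Longrightarrow> q \<le> q\<^sub>V \<Longrightarrow> x \<in> V \<Longrightarrow> q < r x"
    and bound_U: "\<And>q x. 0 < q \<Longrightarrow> q \<le> q\<^sub>U \<Longrightarrow> x \<in> U \<Longrightarrow> chem_pot (r x + q) x \<le> \<alpha> q"
    and bound_V: "\<And>q x. 0 < q \<Longrightarrow> q \<le> q\<^sub>V \<Longrightarrow> x \<in> V \<Longrightarrow> - chem_pot (r x - q) x \<le> \<beta> q"
  obtains t0 C where "0 < t0"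
    and "\<forall>t. 0 < t \<and> t \<le> t0 \<longrightarrow> 0 \<le> \<alpha> (t / measure \<mu> U) + \<beta> (t / measure \<mu> V) + t * C"
proof -
  define u v where "u = measure \<mu> U" and "v = measure \<mu> V"
  define t0 where "t0 = min (q\<^sub>U * u) (q\<^sub>V * v)"
  have "0 < t0" using U V \<open>0 < q\<^sub>U\<close> \<open>0 < q\<^sub>V\<close> by (simp add: t0_def u_def v_def)
  have q: "0 < t / u" "t / u \<le> q\<^sub>U" "0 < t / v" "t / v \<le> q\<^sub>V" if "0 < t" "t \<le> t0" for t
    using that U V by (auto simp: t0_def u_def v_def divide_le_eq mult.commute)
  define C where "C = c11 * (\<integral>x. transfer_direction U V x * conv \<Omega> K (transfer_direction U V) x \<partial>\<mu>)"
  have "0 \<le> \<alpha> (t / u) + \<beta> (t / v) + t * C" if t: "0 < t" "t \<le> t0" for t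
    using U V \<open>U \<inter> V = {}\<close> t room_U room_V bound_U bound_V q[OF t]
    unfolding C_def u_def v_def by (intro transfer_first_variation) auto
  with \<open>0 < t0\<close> show ?thesis by (intro that[of t0 C]) (auto simp: u_def v_def)
qed

section \<open>The chemical potential is constant\<close>

lemma measure_Collect_pos:
  assumes "\<not> (AE x in \<mu>. \<not> P x)" and [measurable]: "Measurable.pred \<mu> P"
  shows "{x \<in> \<Omega>. P x} \<in> sets \<mu> \<and> 0 < measure \<mu> {x \<in> \<Omega>. P x}"
proof -
  have "{x \<in> space \<mu>. P x} \<in> sets \<mu>" by measurable
  then show ?thesis using domain.measure_pos_if_not_AE[of P] assms(1) by simp
qed

lemma not_AE_saturated: "\<not> (AE x in \<mu>. r x + b x = 1)"
proof
  assume "AE x in \<mu>. r x + b x = 1"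
  then have "(\<integral>x. 1 - (r x + b x) \<partial>\<mu>) = 0" by (intro integral_eq_zero_AE) auto
  moreover have "(\<integral>x. 1 - (r x + b x) \<partial>\<mu>) = measure lebesgue \<Omega> - (mr + mb)"
    using integrable_bounded_measurable[OF bounded_measurable_r] integrable_bounded_measurable[OF bounded_measurable_b]
    by (simp add: integral_r integral_b measure_domain)
  ultimately show False using mass_lt by simp
qed

lemma not_AE_vacuum: "\<not> (AE x in \<mu>. r x = 0)"
proof
  assume "AE x in \<mu>. r x = 0"
  then have "(\<integral>x. r x \<partial>\<mu>) = 0" by (intro integral_eq_zero_AE)
  with integral_r mr_pos show False by simp
qed

lemma measure_pos_lower_bound:
  fixes g :: "'a \<Rightarrow> real"
  assumes "\<not> (AE x in \<mu>. \<not> P x)" and "AE x in \<mu>. P x \<longrightarrow> 0 < g x"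
    and [measurable]: "Measurable.pred \<mu> P" "g \<in> borel_measurable \<mu>"
  shows "\<exists>\<delta>>0. {x \<in> \<Omega>. P x \<and> \<delta> \<le> g x} \<in> sets \<mu> \<and> 0 < measure \<mu> {x \<in> \<Omega>. P x \<and> \<delta> \<le> g x}"
proof -
  obtain \<delta> where "0 < \<delta>" and "\<not> (AE x in \<mu>. \<not> (P x \<and> \<delta> \<le> g x))"
    using not_AE_imp_ex_lower_bound[of P \<mu> g, OF assms(1,2)] by blast
  moreover from this(2) have "{x \<in> \<Omega>. P x \<and> \<delta> \<le> g x} \<in> sets \<mu> \<and> 0 < measure \<mu> {x \<in> \<Omega>. P x \<and> \<delta> \<le> g x}"
    by (rule measure_Collect_pos) measurable
  ultimately show ?thesis by blast
qed

lemma abs_potential_bounded: "\<exists>P. \<forall>x\<in>\<Omega>. \<bar>potential x\<bar> \<le> P"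
  by (rule bounded_measurableE[OF bounded_measurable_potential]) blast

lemma chem_pot_add_le:
  assumes x: "x \<in> \<Omega>" and P: "\<bar>potential x\<bar> \<le> P"
    and "0 < \<delta>" and "\<delta> \<le> 1 - (r x + b x)" and "0 < q" and "q \<le> \<delta> / 2"
  shows "chem_pot (r x + q) x \<le> \<epsilon> * (ln (r x + q) + ln (2 / \<delta>)) + P"
proof -
  have "- ln (1 - (r x + q + b x)) \<le> - ln (\<delta> / 2)"
    using assms by (intro le_imp_neg_le ln_mono) auto
  then have "\<epsilon> * (ln (r x + q) - ln (1 - (r x + q + b x))) \<le> \<epsilon> * (ln (r x + q) + ln (2 / \<delta>))"
    using eps_pos \<open>0 < \<delta>\<close> by (intro mult_left_mono) (auto simp: ln_div)
  with P show ?thesis by (simp add: chem_pot_def abs_le_iff add.assoc)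
qed

lemma neg_chem_pot_diff_le:
  assumes x: "x \<in> \<Omega>" and P: "\<bar>potential x\<bar> \<le> P"
    and "0 < \<delta>" and "\<delta> \<le> r x" and "0 < q" and "q \<le> \<delta> / 2"
  shows "- chem_pot (r x - q) x \<le> \<epsilon> * (ln (1 - (r x - q + b x)) + ln (2 / \<delta>)) + P"
proof -
  have "- ln (r x - q) \<le> - ln (\<delta> / 2)"
    using assms by (intro le_imp_neg_le ln_mono) auto
  then have "\<epsilon> * (ln (1 - (r x - q + b x)) - ln (r x - q)) \<le> \<epsilon> * (ln (1 - (r x - q + b x)) + ln (2 / \<delta>))"
    using eps_pos \<open>0 < \<delta>\<close> by (intro mult_left_mono) (auto simp: ln_div)
  with P show ?thesis by (simp add: chem_pot_def abs_le_iff algebra_simps)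
qed

text \<open>
  Removing mass \<open>t\<close> from a saturated region gains \<open>\<epsilon> t |log t|\<close> in entropy, more than the
  \<open>O(t)\<close> it costs to put it where there is room.
\<close>
lemma saturated_minority_null: "AE x in \<mu>. r x + b x = 1 \<longrightarrow> r x < 1/2"
proof (rule ccontr)
  obtain P where P: "\<forall>x\<in>\<Omega>. \<bar>potential x\<bar> \<le> P" using abs_potential_bounded by blast
  assume "\<not> ?thesis"
  then have "\<not> (AE x in \<mu>. \<not> (r x + b x = 1 \<and> 1/2 \<le> r x))" by (simp add: not_le)
  then have "{x \<in> \<Omega>. r x + b x = 1 \<and> 1/2 \<le> r x} \<in> sets \<mu> \<and> 0 < measure \<mu> {x \<in> \<Omega>. r x + b x = 1 \<and> 1/2 \<le> r x}"
    by (rule measure_Collect_pos) measurable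
  then obtain V where V: "V \<in> sets \<mu>" "0 < measure \<mu> V" and V_def: "V = {x \<in> \<Omega>. r x + b x = 1 \<and> 1/2 \<le> r x}"
    by blast
  have "\<not> (AE x in \<mu>. \<not> r x + b x \<noteq> 1)" using not_AE_saturated by simp
  moreover have "AE x in \<mu>. r x + b x \<noteq> 1 \<longrightarrow> 0 < 1 - (r x + b x)"
    by (intro AE_I2) (use box in fastforce)
  ultimately have "\<exists>\<delta>>0. {x \<in> \<Omega>. r x + b x \<noteq> 1 \<and> \<delta> \<le> 1 - (r x + b x)} \<in> sets \<mu>
      \<and> 0 < measure \<mu> {x \<in> \<Omega>. r x + b x \<noteq> 1 \<and> \<delta> \<le> 1 - (r x + b x)}"
    by (rule measure_pos_lower_bound) measurable
  then obtain \<delta> U where "0 < \<delta>" and U: "U \<in> sets \<mu>" "0 < measure \<mu> U"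
    and U_def: "U = {x \<in> \<Omega>. r x + b x \<noteq> 1 \<and> \<delta> \<le> 1 - (r x + b x)}"
    by blast
  have "U \<inter> V = {}" by (auto simp: U_def V_def)
  obtain t0 C where "0 < t0" and C: "\<forall>t. 0 < t \<and> t \<le> t0 \<longrightarrow>
      0 \<le> (\<epsilon> * ln (2 / \<delta>) + P) + (\<epsilon> * (ln (t / measure \<mu> V) + ln 4) + P) + t * C"
  proof (rule mass_transfer[OF U V \<open>U \<inter> V = {}\<close>, of "\<delta> / 2" "1 / 4"])
    fix q :: real and x assume q: "0 < q" "q \<le> \<delta> / 2" and "x \<in> U"
    then have x: "x \<in> \<Omega>" "\<delta> \<le> 1 - (r x + b x)" by (auto simp: U_def)
    with q \<open>0 < \<delta>\<close> show "r x + q + b x < 1" by linarith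
    have "\<epsilon> * ln (r x + q) \<le> 0" using x q box[OF x(1)] eps_pos by (simp add: mult_nonneg_nonpos)
    then show "chem_pot (r x + q) x \<le> \<epsilon> * ln (2 / \<delta>) + P"
      using chem_pot_add_le[OF x(1) P[rule_format, OF x(1)] \<open>0 < \<delta>\<close> x(2) q] by (simp add: distrib_left)
  next
    fix q :: real and x assume q: "0 < q" "q \<le> 1 / 4" and "x \<in> V"
    then have x: "x \<in> \<Omega>" "r x + b x = 1" "1/2 \<le> r x" by (auto simp: V_def)
    with q show "q < r x" by linarith
    have saturated: "1 - (r x - q + b x) = q" using x by simp
    show "- chem_pot (r x - q) x \<le> \<epsilon> * (ln q + ln 4) + P"
      using neg_chem_pot_diff_le[OF x(1) P[rule_format, OF x(1)], of "1/2" q, unfolded saturated] x q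
      by simp
  qed (use \<open>0 < \<delta>\<close> in auto)
  obtain t where t: "0 < t" "t \<le> t0"
    and "\<epsilon> * ln t + (\<epsilon> * ln (2 / \<delta>) + 2 * P + \<epsilon> * (ln 4 - ln (measure \<mu> V))) + t * C < 0"
    using ex_small_log_plus_linear_neg[OF eps_pos \<open>0 < t0\<close>] by blast
  moreover have "\<epsilon> * ln (t / measure \<mu> V) = \<epsilon> * ln t - \<epsilon> * ln (measure \<mu> V)"
    using t V by (simp add: ln_div right_diff_distrib)
  ultimately show False using C t by (auto simp: algebra_simps)
qed

text \<open>
  Likewise, adding mass \<open>t\<close> where \<open>r\<close> vanishes gains \<open>\<epsilon> t |log t|\<close>.
\<close>
lemma vacuum_null:
  assumes unsaturated: "AE x in \<mu>. r x + b x < 1"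
  shows "AE x in \<mu>. 0 < r x"
proof (rule ccontr)
  obtain P where P: "\<forall>x\<in>\<Omega>. \<bar>potential x\<bar> \<le> P" using abs_potential_bounded by blast
  have r_pos: "AE x in \<mu>. r x \<noteq> 0 \<longrightarrow> 0 < r x" using box by (intro AE_I2) fastforce
  assume not_pos: "\<not> ?thesis"
  have "\<not> (AE x in \<mu>. \<not> r x = 0)"
  proof
    assume "AE x in \<mu>. \<not> r x = 0"
    with r_pos have "AE x in \<mu>. 0 < r x" by eventually_elim auto
    with not_pos show False by contradiction
  qed
  moreover have "AE x in \<mu>. r x = 0 \<longrightarrow> 0 < 1 - (r x + b x)" using unsaturated by eventually_elim simp
  ultimately have "\<exists>\<delta>>0. {x \<in> \<Omega>. r x = 0 \<and> \<delta> \<le> 1 - (r x + b x)} \<in> sets \<mu>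
      \<and> 0 < measure \<mu> {x \<in> \<Omega>. r x = 0 \<and> \<delta> \<le> 1 - (r x + b x)}"
    by (rule measure_pos_lower_bound) measurable
  then obtain \<delta> U where "0 < \<delta>" and U: "U \<in> sets \<mu>" "0 < measure \<mu> U"
    and U_def: "U = {x \<in> \<Omega>. r x = 0 \<and> \<delta> \<le> 1 - (r x + b x)}"
    by blast
  have "\<not> (AE x in \<mu>. \<not> r x \<noteq> 0)" using not_AE_vacuum by simp
  then have "\<exists>\<delta>'>0. {x \<in> \<Omega>. r x \<noteq> 0 \<and> \<delta>' \<le> r x} \<in> sets \<mu> \<and> 0 < measure \<mu> {x \<in> \<Omega>. r x \<noteq> 0 \<and> \<delta>' \<le> r x}"
    using r_pos by (rule measure_pos_lower_bound) measurable
  then obtain \<delta>' V where "0 < \<delta>'" and V: "V \<in> sets \<mu>" "0 < measure \<mu> V"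
    and V_def: "V = {x \<in> \<Omega>. r x \<noteq> 0 \<and> \<delta>' \<le> r x}"
    by blast
  have "U \<inter> V = {}" by (auto simp: U_def V_def)
  obtain t0 C where "0 < t0" and C: "\<forall>t. 0 < t \<and> t \<le> t0 \<longrightarrow>
      0 \<le> (\<epsilon> * (ln (t / measure \<mu> U) + ln (2 / \<delta>)) + P) + (\<epsilon> * ln (2 / \<delta>') + P) + t * C"
  proof (rule mass_transfer[OF U V \<open>U \<inter> V = {}\<close>, of "\<delta> / 2" "\<delta>' / 2"])
    fix q :: real and x assume q: "0 < q" "q \<le> \<delta> / 2" and "x \<in> U"
    then have x: "x \<in> \<Omega>" "r x = 0" "\<delta> \<le> 1 - (r x + b x)" by (auto simp: U_def)
    with q \<open>0 < \<delta>\<close> show "r x + q + b x < 1" by linarith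
    show "chem_pot (r x + q) x \<le> \<epsilon> * (ln q + ln (2 / \<delta>)) + P"
      using chem_pot_add_le[OF x(1) P[rule_format, OF x(1)] \<open>0 < \<delta>\<close> x(3) q] x(2) by simp
  next
    fix q :: real and x assume q: "0 < q" "q \<le> \<delta>' / 2" and "x \<in> V"
    then have x: "x \<in> \<Omega>" "\<delta>' \<le> r x" by (auto simp: V_def)
    with q \<open>0 < \<delta>'\<close> show "q < r x" by linarith
    have "\<epsilon> * ln (1 - (r x - q + b x)) \<le> 0" using x q box[OF x(1)] eps_pos by (simp add: mult_nonneg_nonpos)
    then show "- chem_pot (r x - q) x \<le> \<epsilon> * ln (2 / \<delta>') + P"
      using neg_chem_pot_diff_le[OF x(1) P[rule_format, OF x(1)] \<open>0 < \<delta>'\<close> x(2) q] by (simp add: distrib_left)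
  qed (use \<open>0 < \<delta>\<close> \<open>0 < \<delta>'\<close> in auto)
  obtain t where t: "0 < t" "t \<le> t0"
    and "\<epsilon> * ln t + (\<epsilon> * (ln (2 / \<delta>) - ln (measure \<mu> U) + ln (2 / \<delta>')) + 2 * P) + t * C < 0"
    using ex_small_log_plus_linear_neg[OF eps_pos \<open>0 < t0\<close>] by blast
  moreover have "\<epsilon> * ln (t / measure \<mu> U) = \<epsilon> * ln t - \<epsilon> * ln (measure \<mu> U)"
    using t U by (simp add: ln_div right_diff_distrib)
  ultimately show False using C t by (auto simp: algebra_simps)
qed

lemma chem_pot_measurable [measurable]:
  assumes [measurable]: "f \<in> borel_measurable \<mu>"
  shows "(\<lambda>x. chem_pot (f x) x) \<in> borel_measurable \<mu>"
  unfolding chem_pot_def by measurable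

lemma abs_chem_pot_shift_le:
  assumes x: "x \<in> \<Omega>" and "0 < \<delta>" and "\<delta> \<le> r x" and "\<delta> \<le> 1 - (r x + b x)" and d: "\<bar>d\<bar> \<le> \<delta> / 2"
  shows "\<bar>chem_pot (r x + d) x - chem_pot (r x) x\<bar> \<le> 4 * \<epsilon> * \<bar>d\<bar> / \<delta>"
proof -
  define A B where "A = ln (r x + d) - ln (r x)"
    and "B = ln (1 - (r x + d + b x)) - ln (1 - (r x + b x))"
  have "\<bar>A\<bar> \<le> 2 * \<bar>d\<bar> / \<delta>"
    unfolding A_def using assms by (intro abs_ln_add_le) auto
  moreover have "\<bar>B\<bar> \<le> 2 * \<bar>d\<bar> / \<delta>"
    unfolding B_def using abs_ln_add_le[of \<delta> "1 - (r x + b x)" "- d"] assms by (simp add: algebra_simps)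
  ultimately have "\<bar>A - B\<bar> \<le> 4 * \<bar>d\<bar> / \<delta>" using abs_triangle_ineq4[of A B] by simp
  then have "\<epsilon> * \<bar>A - B\<bar> \<le> \<epsilon> * (4 * \<bar>d\<bar> / \<delta>)" using eps_pos by (intro mult_left_mono) auto
  moreover have "chem_pot (r x + d) x - chem_pot (r x) x = \<epsilon> * (A - B)"
    by (simp add: chem_pot_def A_def B_def algebra_simps)
  ultimately show ?thesis using eps_pos by (simp add: abs_mult mult_ac)
qed

text \<open>
  Moving mass \<open>t\<close> from \<open>{chem_pot > c}\<close> to \<open>{chem_pot < a}\<close> would lower the energy by about
  \<open>(c - a) t\<close>.
\<close>
lemma level_sets_chem_pot:
  assumes unsaturated: "AE x in \<mu>. r x + b x < 1" and positive: "AE x in \<mu>. 0 < r x" and "a < c"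
  shows "(AE x in \<mu>. a \<le> chem_pot (r x) x) \<or> (AE x in \<mu>. chem_pot (r x) x \<le> c)"
proof (rule ccontr)
  define g where "g x = min (r x) (1 - (r x + b x))" for x
  have [measurable]: "g \<in> borel_measurable \<mu>" unfolding g_def by measurable
  have interior: "AE x in \<mu>. P x \<longrightarrow> 0 < g x" for P
    using unsaturated positive by eventually_elim (simp add: g_def)
  assume "\<not> ?thesis"
  then have below: "\<not> (AE x in \<mu>. \<not> chem_pot (r x) x < a)"
    and above: "\<not> (AE x in \<mu>. \<not> c < chem_pot (r x) x)"
    by (simp_all add: not_less)
  have "\<exists>\<delta>>0. {x \<in> \<Omega>. chem_pot (r x) x < a \<and> \<delta> \<le> g x} \<in> sets \<mu>
      \<and> 0 < measure \<mu> {x \<in> \<Omega>. chem_pot (r x) x < a \<and> \<delta> \<le> g x}"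
    by (rule measure_pos_lower_bound[OF below interior]) measurable
  moreover have "\<exists>\<delta>>0. {x \<in> \<Omega>. c < chem_pot (r x) x \<and> \<delta> \<le> g x} \<in> sets \<mu>
      \<and> 0 < measure \<mu> {x \<in> \<Omega>. c < chem_pot (r x) x \<and> \<delta> \<le> g x}"
    by (rule measure_pos_lower_bound[OF above interior]) measurable
  ultimately
  obtain \<delta>1 \<delta>2 U V where "0 < \<delta>1" and U: "U \<in> sets \<mu>" "0 < measure \<mu> U"
    and U_def: "U = {x \<in> \<Omega>. chem_pot (r x) x < a \<and> \<delta>1 \<le> g x}"
    and "0 < \<delta>2" and V: "V \<in> sets \<mu>" "0 < measure \<mu> V"
    and V_def: "V = {x \<in> \<Omega>. c < chem_pot (r x) x \<and> \<delta>2 \<le> g x}"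
    by blast
  have "U \<inter> V = {}" using \<open>a < c\<close> by (auto simp: U_def V_def)
  obtain t0 C where "0 < t0" and C: "\<forall>t. 0 < t \<and> t \<le> t0 \<longrightarrow>
      0 \<le> (a + 4 * \<epsilon> * (t / measure \<mu> U) / \<delta>1) + (- c + 4 * \<epsilon> * (t / measure \<mu> V) / \<delta>2) + t * C"
  proof (rule mass_transfer[OF U V \<open>U \<inter> V = {}\<close>, of "\<delta>1 / 2" "\<delta>2 / 2"])
    fix q :: real and x assume q: "0 < q" "q \<le> \<delta>1 / 2" and "x \<in> U"
    then have x: "x \<in> \<Omega>" "chem_pot (r x) x < a" "\<delta>1 \<le> r x" "\<delta>1 \<le> 1 - (r x + b x)"
      by (auto simp: U_def g_def)
    with q \<open>0 < \<delta>1\<close> show "r x + q + b x < 1" by linarith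
    show "chem_pot (r x + q) x \<le> a + 4 * \<epsilon> * q / \<delta>1"
      using abs_chem_pot_shift_le[OF x(1) \<open>0 < \<delta>1\<close> x(3,4), of q] q x(2) by (simp add: abs_le_iff)
  next
    fix q :: real and x assume q: "0 < q" "q \<le> \<delta>2 / 2" and "x \<in> V"
    then have x: "x \<in> \<Omega>" "c < chem_pot (r x) x" "\<delta>2 \<le> r x" "\<delta>2 \<le> 1 - (r x + b x)"
      by (auto simp: V_def g_def)
    with q \<open>0 < \<delta>2\<close> show "q < r x" by linarith
    show "- chem_pot (r x - q) x \<le> - c + 4 * \<epsilon> * q / \<delta>2"
      using abs_chem_pot_shift_le[OF x(1) \<open>0 < \<delta>2\<close> x(3,4), of "- q"] q x(2) by (simp add: abs_le_iff)
  qed (use \<open>0 < \<delta>1\<close> \<open>0 < \<delta>2\<close> in auto)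
  define D where "D = 4 * \<epsilon> / (measure \<mu> U * \<delta>1) + 4 * \<epsilon> / (measure \<mu> V * \<delta>2) + C"
  obtain t where t: "0 < t" "t \<le> t0" and "t * D - (c - a) < 0"
    using ex_small_linear_neg[of "c - a" t0] \<open>a < c\<close> \<open>0 < t0\<close> by auto
  moreover have "(a + 4 * \<epsilon> * (t / measure \<mu> U) / \<delta>1) + (- c + 4 * \<epsilon> * (t / measure \<mu> V) / \<delta>2) + t * C
      = t * D - (c - a)"
    by (simp add: D_def field_simps)
  ultimately show False using C by auto
qed

lemma minimizer_swap: "minimizer \<Omega> K \<epsilon> c22 c11 mb mr b r"
proof unfold_locales
  show "0 \<le> b x \<and> 0 \<le> r x \<and> b x + r x \<le> 1" if "x \<in> \<Omega>" for x using box[OF that] by auto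
  show "F_eps \<epsilon> \<Omega> K c22 c11 b r \<le> F_eps \<epsilon> \<Omega> K c22 c11 r' b'" if "(r', b') \<in> admissible_set \<Omega> mb mr" for r' b'
    using minimal[of b' r'] that by (simp add: F_eps_swap admissible_set_swap)
qed (use mass_lt in \<open>simp_all add: open_domain bounded_domain admissible eps_pos mr_pos mb_pos
      integral_r integral_b add.commute\<close>)

lemma unsaturated: "AE x in \<mu>. r x + b x < 1"
proof -
  interpret swapped: minimizer \<Omega> K \<epsilon> c22 c11 mb mr b r by (rule minimizer_swap)
  have "AE x in \<mu>. x \<in> \<Omega>" by (rule AE_I2) simp
  with saturated_minority_null swapped.saturated_minority_null show ?thesis
    by eventually_elim (use box in fastforce)
qed

lemma chem_pot_AE_const: "\<exists>C. AE x in \<mu>. chem_pot (r x) x = C"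
proof (rule AE_eq_const_if_level_sets)
  show "emeasure \<mu> (space \<mu>) \<noteq> 0"
    using mass_lt mr_pos mb_pos by (simp add: domain.emeasure_eq_measure measure_domain)
  show "(AE x in \<mu>. a \<le> chem_pot (r x) x) \<or> (AE x in \<mu>. chem_pot (r x) x \<le> c)" if "a < c" for a c
    using level_sets_chem_pot[OF unsaturated vacuum_null[OF unsaturated] that] .
qed

lemma euler_lagrange:
  "\<exists>C1 C2. AE x in \<mu>.
     \<epsilon> * (ln (r x) - ln (1 - (r x + b x))) + 2 * (c11 * conv \<Omega> K r x - conv \<Omega> K b x) = C1 \<and>
     \<epsilon> * (ln (b x) - ln (1 - (r x + b x))) + 2 * (c22 * conv \<Omega> K b x - conv \<Omega> K r x) = C2"
proof -
  interpret swapped: minimizer \<Omega> K \<epsilon> c22 c11 mb mr b r by (rule minimizer_swap)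
  obtain C1 C2 where "AE x in \<mu>. chem_pot (r x) x = C1" and "AE x in \<mu>. swapped.chem_pot (b x) x = C2"
    using chem_pot_AE_const swapped.chem_pot_AE_const by blast
  then have "AE x in \<mu>. chem_pot (r x) x = C1 \<and> swapped.chem_pot (b x) x = C2" by eventually_elim simp
  then show ?thesis
    by (auto simp: chem_pot_def swapped.chem_pot_def potential_def swapped.potential_def add.commute)
qed

end

lemma (in admissible_kernel) euler_lagrange_AE:
  assumes "0 < \<epsilon>" and "0 < mr" and "0 < mb" and "mr + mb < measure lebesgue \<Omega>"
    and adm: "(r, b) \<in> admissible_set \<Omega> mr mb"
    and min: "\<forall>(r', b') \<in> admissible_set \<Omega> mr mb.
      F_eps \<epsilon> \<Omega> K c11 c22 r b \<le> F_eps \<epsilon> \<Omega> K c11 c22 r' b'"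
  shows "\<exists>C1 C2. AE x in \<mu>.
     \<epsilon> * (ln (r x) - ln (1 - (r x + b x))) + 2 * (c11 * conv \<Omega> K r x - conv \<Omega> K b x) = C1 \<and>
     \<epsilon> * (ln (b x) - ln (1 - (r x + b x))) + 2 * (c22 * conv \<Omega> K b x - conv \<Omega> K r x) = C2"
proof -
  have r_meas: "r \<in> borel_measurable \<mu>" and b_meas: "b \<in> borel_measurable \<mu>"
    using adm by (auto simp: admissible_set_def borel_measurable_integrable)
  obtain r0 b0 where r0_meas: "r0 \<in> borel_measurable \<mu>" and b0_meas: "b0 \<in> borel_measurable \<mu>"
    and box: "\<forall>x\<in>\<Omega>. 0 \<le> r0 x \<and> 0 \<le> b0 x \<and> r0 x + b0 x \<le> 1"
    and r0: "AE x in \<mu>. r0 x = r x" and b0: "AE x in \<mu>. b0 x = b x"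
    by (rule admissible_set_representative[OF adm])
  have conv_eq: "conv \<Omega> K r0 = conv \<Omega> K r" "conv \<Omega> K b0 = conv \<Omega> K b"
    using conv_cong_AE[OF r0_meas r_meas r0] conv_cong_AE[OF b0_meas b_meas b0] by (simp_all add: fun_eq_iff)
  interpret minimizer \<Omega> K \<epsilon> c11 c22 mr mb r0 b0
  proof unfold_locales
    show "(\<integral>x. r0 x \<partial>\<mu>) = mr" "(\<integral>x. b0 x \<partial>\<mu>) = mb"
      using adm integral_cong_AE[OF r0_meas r_meas r0] integral_cong_AE[OF b0_meas b_meas b0]
      by (auto simp: admissible_set_def)
    show "F_eps \<epsilon> \<Omega> K c11 c22 r0 b0 \<le> F_eps \<epsilon> \<Omega> K c11 c22 r' b'"
      if "(r', b') \<in> admissible_set \<Omega> mr mb" for r' b'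
      using min that F_eps_cong_AE[OF r0_meas r_meas b0_meas b_meas r0 b0] by auto
  qed (use assms box r0_meas b0_meas in auto)
  obtain C1 C2 where "AE x in \<mu>.
     \<epsilon> * (ln (r0 x) - ln (1 - (r0 x + b0 x))) + 2 * (c11 * conv \<Omega> K r0 x - conv \<Omega> K b0 x) = C1 \<and>
     \<epsilon> * (ln (b0 x) - ln (1 - (r0 x + b0 x))) + 2 * (c22 * conv \<Omega> K b0 x - conv \<Omega> K r0 x) = C2"
    using euler_lagrange by blast
  with r0 b0 have "AE x in \<mu>.
     \<epsilon> * (ln (r x) - ln (1 - (r x + b x))) + 2 * (c11 * conv \<Omega> K r x - conv \<Omega> K b x) = C1 \<and>
     \<epsilon> * (ln (b x) - ln (1 - (r x + b x))) + 2 * (c22 * conv \<Omega> K b x - conv \<Omega> K r x) = C2"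
    by eventually_elim (simp add: conv_eq)
  then show ?thesis by blast
qed

theorem proposition2p7:
  fixes \<Omega> :: "'a::euclidean_space set" and K :: "'a \<Rightarrow> real"
    and \<epsilon> c11 c22 mr mb :: real and r b :: "'a \<Rightarrow> real"
  assumes "open \<Omega>" and "bounded \<Omega>"
    and "\<epsilon> > 0" and "c11 \<le> 0" and "c22 \<le> 0"
    and "admissible \<Omega> K"
    and "mr > 0" and "mb > 0" and "mr + mb < measure lebesgue \<Omega>"
    and "(r, b) \<in> admissible_set \<Omega> mr mb"
    and "\<forall>(r', b') \<in> admissible_set \<Omega> mr mb.
           F_eps \<epsilon> \<Omega> K c11 c22 r b \<le> F_eps \<epsilon> \<Omega> K c11 c22 r' b'"
  shows "(\<forall>\<phi>. essentially_bounded \<Omega> \<phi> \<and> (\<integral>x. \<phi> x \<partial>lebesgue_on \<Omega>) = 0 \<longrightarrow>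
            integrable (lebesgue_on \<Omega>) (\<lambda>x. \<phi> x * (\<epsilon> * (ln (r x) - ln (1 - (r x + b x)))
                 + 2 * (c11 * conv \<Omega> K r x - conv \<Omega> K b x))) \<and>
            (\<integral>x. \<phi> x * (\<epsilon> * (ln (r x) - ln (1 - (r x + b x)))
                 + 2 * (c11 * conv \<Omega> K r x - conv \<Omega> K b x)) \<partial>lebesgue_on \<Omega>) = 0 \<and>
            integrable (lebesgue_on \<Omega>) (\<lambda>x. \<phi> x * (\<epsilon> * (ln (b x) - ln (1 - (r x + b x)))
                 + 2 * (c22 * conv \<Omega> K b x - conv \<Omega> K r x))) \<and>
            (\<integral>x. \<phi> x * (\<epsilon> * (ln (b x) - ln (1 - (r x + b x)))
                 + 2 * (c22 * conv \<Omega> K b x - conv \<Omega> K r x)) \<partial>lebesgue_on \<Omega>) = 0)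
       \<and> (\<exists>C1 C2. AE x in lebesgue_on \<Omega>.
            \<epsilon> * (ln (r x) - ln (1 - (r x + b x))) + 2 * (c11 * conv \<Omega> K r x - conv \<Omega> K b x) = C1 \<and>
            \<epsilon> * (ln (b x) - ln (1 - (r x + b x))) + 2 * (c22 * conv \<Omega> K b x - conv \<Omega> K r x) = C2)"
    (is "(\<forall>\<phi>. _ \<longrightarrow> ?tested \<phi>) \<and> (\<exists>C1 C2. AE x in _. ?g1 x = C1 \<and> ?g2 x = C2)")
proof -
  interpret admissible_kernel \<Omega> K using assms(1,2,6) by unfold_locales
  obtain C1 C2 where const: "AE x in \<mu>. ?g1 x = C1 \<and> ?g2 x = C2"
    using euler_lagrange_AE[OF assms(3,7-11)] by blast
  have [measurable]: "r \<in> borel_measurable \<mu>" "b \<in> borel_measurable \<mu>"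
    using assms(10) by (auto simp: admissible_set_def borel_measurable_integrable)
  then have [measurable]: "conv \<Omega> K r \<in> borel_measurable \<mu>" "conv \<Omega> K b \<in> borel_measurable \<mu>"
    by (simp_all add: borel_measurable_conv)
  have "?tested \<phi>" if bounded: "essentially_bounded \<Omega> \<phi>" and mean_zero: "(\<integral>x. \<phi> x \<partial>\<mu>) = 0" for \<phi>
  proof -
    obtain B where [measurable]: "\<phi> \<in> borel_measurable \<mu>" and "AE x in \<mu>. \<bar>\<phi> x\<bar> \<le> B"
      using bounded unfolding essentially_bounded_def by blast
    with const mean_zero show ?thesis
      using domain.integral_mult_AE_const_eq_0[of \<phi> ?g1 B C1] domain.integral_mult_AE_const_eq_0[of \<phi> ?g2 B C2]
      by (auto elim: AE_mp)
  qed
  with const show ?thesis by blast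
qed

end
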